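(* Suppose the cost norm is $\|\cdot\|=\|\cdot\|_2$ and the Margin assumption and Boundedness hold. Let $\{(y_t,b_t)\}_{t\ge1}$ be generated by the gradient-based SMM algorithm with $\gamma_t=1/\sqrt t$ (initialization terminating). Then the algorithm makes finitely many mistakes, i.e. $\hat\ell(r(A_t,y_t,b_t),y_t,b_t)\ne\ell(A_t)$ for only finitely many $t$. If moreover $d_*>2/c$, then $r(A_t,y_t,b_t)\ne A_t$ for only finitely many $t$. If in addition $d_*>2/c$ and the Stochastic assumption holds, then $(y_t,b_t)\to(y_*/\|y_*\|_2,\ b_*/\|y_*\|_2)$ almost surely.
   Context: Setting: $\mathcal{A}\subseteq\mathbb{R}^d$, labels $\ell(A)\in\{\pm1\}$; $\operatorname{sign}(0)=+1$; cost constant $c>0$; norm $\|\cdot\|=\|\cdot\|_2$, $v(y)=y/\|y\|_2$ for $y\ne0$, $v(0)=0$. Predicted label $\hat\ell(x,y,b)=\operatorname{sign}(y^\top x+b-2\|y\|_2/c)$. Response: for $y\ne0$, $r(A,y,b)=A+(\tfrac2c-\tfrac{y^\top A+b}{\|y\|_2})v(y)$ if $0\le\tfrac{y^\top A+b}{\|y\|_2}<\tfrac2c$, else $A$. Proxy: for $y\ne0$, $s(A,y,b)=A-\tfrac{y^\top A+b}{\|y\|_2}v(y)$ if $0\le\tfrac{y^\top A+b}{\|y\|_2}<\tfrac2c$ and $\ell(A)=-1$; $=A+(\tfrac2c-\tfrac{y^\top A+b}{\|y\|_2})v(y)$ if the range condition holds and $\ell(A)=+1$; $=A$ otherwise; $r(A,0,b)=s(A,0,b)=A$.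 Margin function $h(y,b;\widetilde{\mathcal{A}}^+,\widetilde{\mathcal{A}}^-)=\min\{\min_{x\in\widetilde{\mathcal{A}}^+}(y^\top x+b),\min_{x\in\widetilde{\mathcal{A}}^-}(-y^\top x-b)\}$. Margin assumption: $d_*:=\max_{y\ne0,b}\min_{A\in\mathcal{A}}\ell(A)\frac{y^\top A+b}{\|y\|_2}$ attained at some $(y_*,b_* )$, $y_*\ne0$, $d_*>0$. Boundedness: $\sup_{A\in\mathcal{A}}\|A\|_2<\infty$. Stochastic assumption: $\mathcal{A}$ is closed and there is a probability distribution $\mathbb{P}$ on $\mathbb{R}^d$ with $\mathbb{P}[\{x:\|A-x\|_2\le\epsilon\}]>0$ for all $A\in\mathcal{A}$, $\epsilon>0$, and for each $A\notin\mathcal{A}$ some $\epsilon>0$ with $\mathbb{P}[\{x:\|A-x\|_2\le\epsilon\}]=0$; all agents' true features are drawn i.i.d. from $\mathbb{P}$. Gradient-based SMM algorithm: initialization: $\widetilde{\mathcal{A}}_0^\pm=\emptyset$, $(y,b)=(0,1)$; each arriving agent (responding with true $A$) is added to $\widetilde{\mathcal{A}}_0^+$ or $\widetilde{\mathcal{A}}_0^-$ by label; then $b:=-1$ if $\widetilde{\mathcal{A}}_0^+=\emptyset$, else $b:=+1$ if $\widetilde{\mathcal{A}}_0^-=\emptyset$; stop when both nonempty; $(y_1,b_1)$ optimal for $\max\{h(y,b;\widetilde{\mathcal{A}}_0^+,\widetilde{\mathcal{A}}_0^-):\|y\|_2\le1,b\}$; $z_1=y_1$. For $t\ge1$: agent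 $A_t$ is shown $(y_t,b_t)$, responds $r(A_t,y_t,b_t)$, is predicted $\hat\ell(r(A_t,y_t,b_t),y_t,b_t)$; $s(A_t,y_t,b_t)$ is appended to $\widetilde{\mathcal{A}}_{t-1}^+$ if $\ell(A_t)=+1$, else to $\widetilde{\mathcal{A}}_{t-1}^-$, giving $\widetilde{\mathcal{A}}_t^\pm$; $s_t^+\in\arg\min_{x\in\widetilde{\mathcal{A}}_t^+}z_t^\top x$, $s_t^-\in\arg\max_{x\in\widetilde{\mathcal{A}}_t^-}z_t^\top x$; $z_{t+1}=\Pi_B(z_t+\gamma_t(s_t^+-s_t^-))$ ($\Pi_B$: Euclidean projection onto the unit $\ell_2$ ball); $y_{t+1}=\sum_{\tau=1}^{t+1}\gamma_\tau z_\tau/\sum_{\tau=1}^{t+1}\gamma_\tau$; $b_{t+1}=-\tfrac12(\min_{x\in\widetilde{\mathcal{A}}_t^+}y_{t+1}^\top x+\max_{x\in\widetilde{\mathcal{A}}_t^-}y_{t+1}^\top x)$. *)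

theory Defs
  imports "HOL-Analysis.Analysis" "HOL-Probability.Probability"
begin

definition sign1 :: "real \<Rightarrow> int" where
  "sign1 x = (if x \<ge> 0 then 1 else -1)"

definition vdir :: "'a::euclidean_space \<Rightarrow> 'a" where
  "vdir y = (if y = 0 then 0 else y /\<^sub>R norm y)"

definition lhat :: "real \<Rightarrow> 'a::euclidean_space \<Rightarrow> 'a \<Rightarrow> real \<Rightarrow> int" where
  "lhat c x y b = sign1 (y \<bullet> x + b - 2 * norm y / c)"

definition resp :: "real \<Rightarrow> 'a::euclidean_space \<Rightarrow> 'a \<Rightarrow> real \<Rightarrow> 'a" where
  "resp c A y b =
     (if y = 0 then A
      else (let q = (y \<bullet> A + b) / norm y in
            if 0 \<le> q \<and> q < 2 / c then A + (2 / c - q) *\<^sub>R vdir y else A))"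

definition proxy :: "('a \<Rightarrow> int) \<Rightarrow> real \<Rightarrow> 'a::euclidean_space \<Rightarrow> 'a \<Rightarrow> real \<Rightarrow> 'a" where
  "proxy lab c A y b =
     (if y = 0 then A
      else (let q = (y \<bullet> A + b) / norm y in
            if 0 \<le> q \<and> q < 2 / c \<and> lab A = -1 then A - q *\<^sub>R vdir y
            else if 0 \<le> q \<and> q < 2 / c \<and> lab A = 1 then A + (2 / c - q) *\<^sub>R vdir y
            else A))"

definition hmarg :: "'a::euclidean_space \<Rightarrow> real \<Rightarrow> 'a set \<Rightarrow> 'a set \<Rightarrow> real" where
  "hmarg y b P M = min (Min ((\<lambda>x. y \<bullet> x + b) ` P)) (Min ((\<lambda>x. - (y \<bullet> x) - b) ` M))"

definition smargin :: "'a::euclidean_space set \<Rightarrow> ('a \<Rightarrow> int) \<Rightarrow> 'a \<Rightarrow> real \<Rightarrow> real" where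
  "smargin AS lab y b = (INF A\<in>AS. of_int (lab A) * (y \<bullet> A + b) / norm y)"

text \<open>Initialization: the agents a 0, ..., a N arrive during initialization, and N is the
  first index at which both label classes have been seen.\<close>
definition both_seen :: "('a \<Rightarrow> int) \<Rightarrow> (nat \<Rightarrow> 'a) \<Rightarrow> nat \<Rightarrow> bool" where
  "both_seen lab a n = ((\<exists>i\<le>n. lab (a i) = 1) \<and> (\<exists>i\<le>n. lab (a i) = -1))"

definition init_stop :: "('a \<Rightarrow> int) \<Rightarrow> (nat \<Rightarrow> 'a) \<Rightarrow> nat \<Rightarrow> bool" where
  "init_stop lab a N = (both_seen lab a N \<and> (\<forall>n<N. \<not> both_seen lab a n))"

text \<open>A~_t^+ and A~_t^- (t \<ge> 0); the agent of round t \<ge> 1 is a (N + t).\<close>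
definition Apos :: "('a::euclidean_space \<Rightarrow> int) \<Rightarrow> real \<Rightarrow> (nat \<Rightarrow> 'a) \<Rightarrow> nat
    \<Rightarrow> (nat \<Rightarrow> 'a) \<Rightarrow> (nat \<Rightarrow> real) \<Rightarrow> nat \<Rightarrow> 'a set" where
  "Apos lab c a N y b t =
     {a i | i. i \<le> N \<and> lab (a i) = 1} \<union>
     {proxy lab c (a (N + \<tau>)) (y \<tau>) (b \<tau>) | \<tau>. 1 \<le> \<tau> \<and> \<tau> \<le> t \<and> lab (a (N + \<tau>)) = 1}"

definition Aneg :: "('a::euclidean_space \<Rightarrow> int) \<Rightarrow> real \<Rightarrow> (nat \<Rightarrow> 'a) \<Rightarrow> nat
    \<Rightarrow> (nat \<Rightarrow> 'a) \<Rightarrow> (nat \<Rightarrow> real) \<Rightarrow> nat \<Rightarrow> 'a set" where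
  "Aneg lab c a N y b t =
     {a i | i. i \<le> N \<and> lab (a i) = -1} \<union>
     {proxy lab c (a (N + \<tau>)) (y \<tau>) (b \<tau>) | \<tau>. 1 \<le> \<tau> \<and> \<tau> \<le> t \<and> lab (a (N + \<tau>)) = -1}"

text \<open>(y_t, b_t, z_t)_{t\<ge>1} is a possible run of the gradient-based SMM algorithm with step
  sizes gamma on the agent stream a (all tie-breaking choices allowed).\<close>
definition smm_run :: "'a::euclidean_space set \<Rightarrow> ('a \<Rightarrow> int) \<Rightarrow> real \<Rightarrow> (nat \<Rightarrow> real)
    \<Rightarrow> (nat \<Rightarrow> 'a) \<Rightarrow> nat \<Rightarrow> (nat \<Rightarrow> 'a) \<Rightarrow> (nat \<Rightarrow> real) \<Rightarrow> (nat \<Rightarrow> 'a) \<Rightarrow> bool" where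
  "smm_run AS lab c \<gamma> a N y b z =
    ((\<forall>i. a i \<in> AS) \<and> init_stop lab a N \<and>
     norm (y 1) \<le> 1 \<and>
     (\<forall>y' b'. norm y' \<le> 1 \<longrightarrow>
        hmarg y' b' (Apos lab c a N y b 0) (Aneg lab c a N y b 0)
          \<le> hmarg (y 1) (b 1) (Apos lab c a N y b 0) (Aneg lab c a N y b 0)) \<and>
     z 1 = y 1 \<and>
     (\<forall>t\<ge>1. \<exists>sp sm.
        sp \<in> Apos lab c a N y b t \<and> (\<forall>x\<in>Apos lab c a N y b t. z t \<bullet> sp \<le> z t \<bullet> x) \<and>
        sm \<in> Aneg lab c a N y b t \<and> (\<forall>x\<in>Aneg lab c a N y b t. z t \<bullet> x \<le> z t \<bullet> sm) \<and>
        z (Suc t) = closest_point (cball 0 1) (z t + \<gamma> t *\<^sub>R (sp - sm))) \<and>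
     (\<forall>t\<ge>1. y (Suc t) = (\<Sum>\<tau>=1..Suc t. \<gamma> \<tau> *\<^sub>R z \<tau>) /\<^sub>R (\<Sum>\<tau>=1..Suc t. \<gamma> \<tau>)) \<and>
     (\<forall>t\<ge>1. b (Suc t) = - (1/2) *
        (Min ((\<lambda>x. y (Suc t) \<bullet> x) ` Apos lab c a N y b t)
         + Max ((\<lambda>x. y (Suc t) \<bullet> x) ` Aneg lab c a N y b t))))"

end

theory Submission
  imports Defs
begin

text \<open>Let \<open>F v = min {v \<bullet> (p - n)}\<close> over all positive proxies \<open>p\<close> and negative proxies \<open>n\<close>
  ever fed to the learner. \<open>F\<close> is concave and positively homogeneous, so it has a unique
  maximiser \<open>y_lim\<close> on the unit ball, and the iterates \<open>z t\<close> perform projected subgradient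
  ascent on it: with steps \<open>1/\<surd>t\<close> the averages \<open>y t\<close> converge to \<open>y_lim\<close>, and the offsets
  \<open>b t\<close> to the midpoint \<open>b_lim\<close> of the extreme projections. An invariant of the run,
  \<open>y\<^sub>* \<bullet> y t > 0\<close>, ensures that proxies never lose the margin \<open>d\<^sub>*\<close> of \<open>(y\<^sub>*, b\<^sub>*)\<close>;
  hence \<open>(y_lim, b_lim)\<close> separates all proxies with a margin \<open>D \<ge> d\<^sub>* > 0\<close>. Every
  mistake shows up as a proxy on the wrong side of \<open>(y t, b t)\<close>, so mistakes, and if
  \<open>d\<^sub>* > 2/c\<close> also moves, stop after finitely many rounds; then proxies are the agents
  themselves. Independent agents are almost surely dense in the support \<open>AS\<close>, so the limit
  separates \<open>AS\<close> with margin \<open>D\<close>; maximality of \<open>d\<^sub>*\<close> gives \<open>D = d\<^sub>*\<close>, and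
  uniqueness of the maximiser identifies the limit with the normalised \<open>(y\<^sub>*, b\<^sub>*)\<close>.\<close>

section \<open>The margin function\<close>

lemma hmarg_le_pos:
  assumes "finite P" "finite Q" "p \<in> P" "Q \<noteq> {}"
  shows "hmarg y b P Q \<le> y \<bullet> p + b"
proof -
  have "Min ((\<lambda>x. y \<bullet> x + b) ` P) \<le> y \<bullet> p + b" using assms by (intro Min_le) auto
  then show ?thesis unfolding hmarg_def by linarith
qed

lemma hmarg_le_neg:
  assumes "finite P" "finite Q" "n \<in> Q" "P \<noteq> {}"
  shows "hmarg y b P Q \<le> - (y \<bullet> n) - b"
proof -
  have "Min ((\<lambda>x. - (y \<bullet> x) - b) ` Q) \<le> - (y \<bullet> n) - b" using assms by (intro Min_le) auto
  then show ?thesis unfolding hmarg_def by linarith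
qed

lemma hmarg_greatest:
  assumes "finite P" "finite Q" "P \<noteq> {}" "Q \<noteq> {}"
    and "\<And>p. p \<in> P \<Longrightarrow> k \<le> y \<bullet> p + b" and "\<And>n. n \<in> Q \<Longrightarrow> k \<le> - (y \<bullet> n) - b"
  shows "k \<le> hmarg y b P Q"
  unfolding hmarg_def using assms by (auto simp: Min_ge_iff)

lemma hmarg_add:
  assumes "finite P" "finite Q" "P \<noteq> {}" "Q \<noteq> {}"
  shows "hmarg y b P Q + hmarg y' b' P Q \<le> hmarg (y + y') (b + b') P Q"
proof (rule hmarg_greatest[OF assms])
  fix p assume "p \<in> P"
  then have "hmarg y b P Q \<le> y \<bullet> p + b" "hmarg y' b' P Q \<le> y' \<bullet> p + b'"
    using hmarg_le_pos[OF assms(1,2) _ assms(4)] by blast+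
  then show "hmarg y b P Q + hmarg y' b' P Q \<le> (y + y') \<bullet> p + (b + b')"
    by (simp add: inner_add_left)
next
  fix n assume "n \<in> Q"
  then have "hmarg y b P Q \<le> - (y \<bullet> n) - b" "hmarg y' b' P Q \<le> - (y' \<bullet> n) - b'"
    using hmarg_le_neg[OF assms(1,2) _ assms(3)] by blast+
  then show "hmarg y b P Q + hmarg y' b' P Q \<le> - ((y + y') \<bullet> n) - (b + b')"
    by (simp add: inner_add_left)
qed

lemma hmarg_scaleR:
  assumes "finite P" "finite Q" "P \<noteq> {}" "Q \<noteq> {}" "0 \<le> s"
  shows "s * hmarg y b P Q \<le> hmarg (s *\<^sub>R y) (s * b) P Q"
proof (rule hmarg_greatest[OF assms(1-4)])
  fix p assume "p \<in> P"
  then have "s * hmarg y b P Q \<le> s * (y \<bullet> p + b)"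
    using hmarg_le_pos[OF assms(1,2) _ assms(4)] assms(5) by (intro mult_left_mono)
  then show "s * hmarg y b P Q \<le> (s *\<^sub>R y) \<bullet> p + s * b" by (simp add: algebra_simps)
next
  fix n assume "n \<in> Q"
  then have "s * hmarg y b P Q \<le> s * (- (y \<bullet> n) - b)"
    using hmarg_le_neg[OF assms(1,2) _ assms(3)] assms(5) by (intro mult_left_mono)
  then show "s * hmarg y b P Q \<le> - ((s *\<^sub>R y) \<bullet> n) - s * b" by (simp add: algebra_simps)
qed

lemma hmarg_le_max_mult_norm:
  assumes fin: "finite P" "finite Q" "P \<noteq> {}" "Q \<noteq> {}"
    and max: "\<And>v \<beta>. norm v \<le> 1 \<Longrightarrow> hmarg v \<beta> P Q \<le> H"
  shows "hmarg w b P Q \<le> H * norm w"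
proof (cases "w = 0")
  case True
  obtain p n where "p \<in> P" "n \<in> Q" using fin by blast
  then show ?thesis
    using True hmarg_le_pos[OF fin(1,2) \<open>p \<in> P\<close> fin(4), of 0 b]
      hmarg_le_neg[OF fin(1,2) \<open>n \<in> Q\<close> fin(3), of 0 b]
    by simp
next
  case False
  then have "0 < norm w" by simp
  have "(1 / norm w) * hmarg w b P Q \<le> hmarg ((1 / norm w) *\<^sub>R w) ((1 / norm w) * b) P Q"
    by (rule hmarg_scaleR[OF fin]) simp
  also have "\<dots> \<le> H" using \<open>0 < norm w\<close> by (intro max) simp
  finally show ?thesis using \<open>0 < norm w\<close> by (simp add: field_simps)
qed

text \<open>Otherwise a step of length \<open>s\<close> from the maximiser in direction \<open>u\<close> would raise the
  margin by \<open>s d\<close> while increasing the norm only to second order in \<open>s\<close>.\<close>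

lemma hmarg_argmax_inner_pos:
  assumes fin: "finite P" "finite Q" "P \<noteq> {}" "Q \<noteq> {}"
    and u: "norm u = 1" "0 < d" "d \<le> hmarg u \<beta> P Q"
    and y: "norm y \<le> 1" "\<And>v \<beta>'. norm v \<le> 1 \<Longrightarrow> hmarg v \<beta>' P Q \<le> hmarg y b P Q"
  shows "0 < u \<bullet> y"
proof (rule ccontr)
  assume "\<not> 0 < u \<bullet> y"
  define H where "H = hmarg y b P Q"
  have "d \<le> H" using u y(2)[of u \<beta>] unfolding H_def by linarith
  define s where "s = d / H"
  have "0 < H" "0 < s" "H * s = d" using \<open>d \<le> H\<close> u(2) by (auto simp: s_def)
  have "s * d \<le> s * hmarg u \<beta> P Q" using u(3) \<open>0 < s\<close> by simp
  also have "\<dots> \<le> hmarg (s *\<^sub>R u) (s * \<beta>) P Q" using \<open>0 < s\<close> by (intro hmarg_scaleR[OF fin]) simp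
  finally have "H + s * d \<le> hmarg y b P Q + hmarg (s *\<^sub>R u) (s * \<beta>) P Q"
    unfolding H_def by simp
  also have "\<dots> \<le> hmarg (y + s *\<^sub>R u) (b + s * \<beta>) P Q" by (rule hmarg_add[OF fin])
  also have "\<dots> \<le> H * norm (y + s *\<^sub>R u)"
    using y(2) unfolding H_def by (rule hmarg_le_max_mult_norm[OF fin])
  finally have "(H + s * d)\<^sup>2 \<le> H\<^sup>2 * (norm (y + s *\<^sub>R u))\<^sup>2"
    using \<open>0 < H\<close> \<open>0 < s\<close> u(2) by (metis power_mono power_mult_distrib add_nonneg_nonneg
      less_imp_le mult_nonneg_nonneg)
  moreover have "(norm (y + s *\<^sub>R u))\<^sup>2 \<le> 1 + s\<^sup>2"
  proof -
    have "(norm (y + s *\<^sub>R u))\<^sup>2 = (norm y)\<^sup>2 + 2 * s * (u \<bullet> y) + s\<^sup>2"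
      using u(1) unfolding power2_norm_eq_inner
      by (simp add: norm_eq_1 inner_add_left inner_add_right inner_commute power2_eq_square algebra_simps)
    moreover have "(norm y)\<^sup>2 \<le> 1" using y(1) by (simp add: power_le_one)
    moreover have "s * (u \<bullet> y) \<le> 0" using \<open>0 < s\<close> \<open>\<not> 0 < u \<bullet> y\<close> by (simp add: mult_nonneg_nonpos)
    ultimately show ?thesis by linarith
  qed
  ultimately have "(H + s * d)\<^sup>2 \<le> H\<^sup>2 * (1 + s\<^sup>2)"
    by (meson mult_left_mono order_trans zero_le_power2)
  moreover have "(H + s * d)\<^sup>2 = H\<^sup>2 + 2 * (H * s) * d + (s * d)\<^sup>2"
    and "H\<^sup>2 * (1 + s\<^sup>2) = H\<^sup>2 + (H * s)\<^sup>2"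
    by (simp_all add: power2_eq_square algebra_simps)
  ultimately have "d\<^sup>2 + (s * d)\<^sup>2 \<le> 0"
    unfolding \<open>H * s = d\<close> by (simp add: power2_eq_square)
  moreover have "0 < d\<^sup>2" "0 \<le> (s * d)\<^sup>2" using u(2) by simp_all
  ultimately show False by linarith
qed

section \<open>Projection onto the unit ball\<close>

lemma closest_point_unit_cball:
  fixes x :: "'a::euclidean_space"
  shows "closest_point (cball 0 1) x = (if norm x \<le> 1 then x else x /\<^sub>R norm x)"
proof (cases "norm x \<le> 1")
  case True
  then show ?thesis by (simp add: closest_point_self)
next
  case False
  then have nx: "1 < norm x" by simp
  then have "norm x \<noteq> 0" by linarith
  have "x /\<^sub>R norm x = closest_point (cball 0 1) x"
  proof (rule closest_point_unique)
    show "x /\<^sub>R norm x \<in> cball 0 1" using \<open>norm x \<noteq> 0\<close> by simp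
    show "\<forall>w\<in>cball 0 1. dist x (x /\<^sub>R norm x) \<le> dist x w"
    proof
      fix w :: 'a assume "w \<in> cball 0 1"
      have "x - x /\<^sub>R norm x = (1 - 1 / norm x) *\<^sub>R x" by (simp add: algebra_simps divide_inverse)
      moreover have "0 \<le> 1 - 1 / norm x" using nx by (simp add: divide_le_eq)
      ultimately have "dist x (x /\<^sub>R norm x) = (1 - 1 / norm x) * norm x"
        by (simp add: dist_norm)
      also have "\<dots> = norm x - 1" using \<open>norm x \<noteq> 0\<close> by (simp add: field_simps)
      also have "\<dots> \<le> norm x - norm w" using \<open>w \<in> cball 0 1\<close> by simp
      also have "\<dots> \<le> dist x w" by (simp add: dist_norm norm_triangle_ineq2)
      finally show "dist x (x /\<^sub>R norm x) \<le> dist x w" .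
    qed
  qed auto
  then show ?thesis using False by simp
qed

lemma norm_closest_point_unit_cball: "norm (closest_point (cball 0 1) (x::'a::euclidean_space)) \<le> 1"
  using closest_point_in_set[of "cball (0::'a) 1" x] by simp

lemma inner_closest_point_unit_cball_pos:
  fixes x u :: "'a::euclidean_space"
  assumes "0 < u \<bullet> x"
  shows "0 < u \<bullet> closest_point (cball 0 1) x"
  using assms by (auto simp: closest_point_unit_cball intro!: mult_pos_pos)

lemma projected_step_bound:
  fixes z g w :: "'a::euclidean_space"
  assumes "norm w \<le> 1"
  shows "2 * \<gamma> * (g \<bullet> w - g \<bullet> z) - \<gamma>\<^sup>2 * (norm g)\<^sup>2
    \<le> (norm (z - w))\<^sup>2 - (norm (closest_point (cball 0 1) (z + \<gamma> *\<^sub>R g) - w))\<^sup>2"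
proof -
  define p where "p = closest_point (cball 0 1) (z + \<gamma> *\<^sub>R g)"
  have "dist p (closest_point (cball 0 1) w) \<le> dist (z + \<gamma> *\<^sub>R g) w"
    unfolding p_def by (rule closest_point_lipschitz) auto
  then have "norm (p - w) \<le> norm ((z - w) + \<gamma> *\<^sub>R g)"
    using assms by (simp add: closest_point_self dist_norm algebra_simps)
  then have "(norm (p - w))\<^sup>2 \<le> (norm ((z - w) + \<gamma> *\<^sub>R g))\<^sup>2"
    by (rule power_mono) simp
  moreover have "(norm ((z - w) + \<gamma> *\<^sub>R g))\<^sup>2
      = (norm (z - w))\<^sup>2 + 2 * \<gamma> * (g \<bullet> z - g \<bullet> w) + \<gamma>\<^sup>2 * (norm g)\<^sup>2"
    unfolding power2_norm_eq_inner
    by (simp add: inner_add_left inner_add_right inner_diff_left inner_diff_right inner_commute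
        power2_eq_square algebra_simps)
  moreover have "2 * \<gamma> * (g \<bullet> w - g \<bullet> z) = - (2 * \<gamma> * (g \<bullet> z - g \<bullet> w))"
    by (simp add: algebra_simps)
  ultimately show ?thesis unfolding p_def[symmetric] by linarith
qed

lemma projected_ascent_regret:
  fixes z g :: "nat \<Rightarrow> 'a::euclidean_space"
  assumes step: "\<And>t. 1 \<le> t \<Longrightarrow> z (Suc t) = closest_point (cball 0 1) (z t + \<gamma> t *\<^sub>R g t)"
    and bound: "\<And>t. 1 \<le> t \<Longrightarrow> norm (g t) \<le> G" and "norm w \<le> 1"
  shows "(\<Sum>t=1..T. 2 * \<gamma> t * (g t \<bullet> w - g t \<bullet> z t) - (\<gamma> t)\<^sup>2 * G\<^sup>2)
    \<le> (norm (z 1 - w))\<^sup>2 - (norm (z (Suc T) - w))\<^sup>2"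
proof (induction T)
  case (Suc T)
  have "(norm (g (Suc T)))\<^sup>2 \<le> G\<^sup>2" using bound[of "Suc T"] by (simp add: power_mono)
  then have "(\<gamma> (Suc T))\<^sup>2 * (norm (g (Suc T)))\<^sup>2 \<le> (\<gamma> (Suc T))\<^sup>2 * G\<^sup>2"
    by (simp add: mult_left_mono)
  then show ?case
    using Suc.IH projected_step_bound[OF \<open>norm w \<le> 1\<close>, of \<open>\<gamma> (Suc T)\<close> "g (Suc T)" "z (Suc T)"]
      step[of "Suc T"] by simp
qed simp

section \<open>Responses and proxies\<close>

lemma proxy_cases:
  fixes A y :: "'a::euclidean_space"
  obtains (same) "proxy lab c A y b = A"
  | (neg) "y \<noteq> 0" "lab A = -1" "0 \<le> (y \<bullet> A + b) / norm y" "(y \<bullet> A + b) / norm y < 2 / c"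
      "proxy lab c A y b = A - ((y \<bullet> A + b) / norm y) *\<^sub>R vdir y"
  | (pos) "y \<noteq> 0" "lab A = 1" "0 \<le> (y \<bullet> A + b) / norm y" "(y \<bullet> A + b) / norm y < 2 / c"
      "proxy lab c A y b = A + (2 / c - (y \<bullet> A + b) / norm y) *\<^sub>R vdir y"
proof -
  let ?q = "(y \<bullet> A + b) / norm y"
  have "proxy lab c A y b = A
    \<or> (y \<noteq> 0 \<and> lab A = -1 \<and> 0 \<le> ?q \<and> ?q < 2 / c \<and> proxy lab c A y b = A - ?q *\<^sub>R vdir y)
    \<or> (y \<noteq> 0 \<and> lab A = 1 \<and> 0 \<le> ?q \<and> ?q < 2 / c
        \<and> proxy lab c A y b = A + (2 / c - ?q) *\<^sub>R vdir y)"
    unfolding proxy_def Let_def by auto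
  then show ?thesis using that by blast
qed

lemma inner_vdir: "y \<noteq> 0 \<Longrightarrow> y \<bullet> vdir y = norm y"
  by (simp add: vdir_def power2_norm_eq_inner[symmetric] power2_eq_square)

lemma norm_proxy_le:
  assumes "0 < c"
  shows "norm (proxy lab c A y b) \<le> norm A + 2 / c"
proof -
  have step: "norm (k *\<^sub>R vdir y) \<le> 2 / c" if "0 \<le> k" "k \<le> 2 / c" for k
    using that assms by (simp add: vdir_def)
  show ?thesis
  proof (cases rule: proxy_cases[of lab c A y b])
    case same
    then show ?thesis using assms by simp
  next
    case neg
    then show ?thesis
      using norm_triangle_ineq4[of A "((y \<bullet> A + b) / norm y) *\<^sub>R vdir y"]
        step[of "(y \<bullet> A + b) / norm y"] by simp
  next
    case pos
    then show ?thesis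
      using norm_triangle_ineq[of A "(2 / c - (y \<bullet> A + b) / norm y) *\<^sub>R vdir y"]
        step[of "2 / c - (y \<bullet> A + b) / norm y"] by simp
  qed
qed

text \<open>Proxies only move along \<open>y\<close>, positive ones forward and negative ones backward, so
  they keep any margin of a direction \<open>u\<close> with \<open>u \<bullet> y \<ge> 0\<close>.\<close>

lemma proxy_pos_margin:
  fixes u A y :: "'a::euclidean_space"
  assumes "lab A = 1" "d \<le> u \<bullet> A + \<beta>" "0 \<le> u \<bullet> y"
  shows "d \<le> u \<bullet> proxy lab c A y b + \<beta>"
proof (cases rule: proxy_cases[of lab c A y b])
  case pos
  have "0 \<le> u \<bullet> vdir y" using assms(3) by (simp add: vdir_def)
  moreover have "0 \<le> 2 / c - (y \<bullet> A + b) / norm y" using pos(4) by simp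
  ultimately have "0 \<le> (2 / c - (y \<bullet> A + b) / norm y) * (u \<bullet> vdir y)"
    by simp
  then show ?thesis using pos assms by (simp add: inner_add_right)
qed (use assms in simp_all)

lemma proxy_neg_margin:
  fixes u A y :: "'a::euclidean_space"
  assumes "lab A = -1" "u \<bullet> A + \<beta> \<le> -d" "0 \<le> u \<bullet> y"
  shows "u \<bullet> proxy lab c A y b + \<beta> \<le> -d"
proof (cases rule: proxy_cases[of lab c A y b])
  case neg
  have "0 \<le> u \<bullet> vdir y" using assms(3) by (simp add: vdir_def)
  with neg(3) have "0 \<le> (y \<bullet> A + b) / norm y * (u \<bullet> vdir y)"
    by (rule mult_nonneg_nonneg)
  then show ?thesis using neg assms by (simp add: inner_diff_right)
qed (use assms in simp_all)

lemma resp_moved: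
  assumes "resp c A y b \<noteq> A"
  shows "y \<noteq> 0" "0 \<le> (y \<bullet> A + b) / norm y" "(y \<bullet> A + b) / norm y < 2 / c"
    and "resp c A y b = A + (2 / c - (y \<bullet> A + b) / norm y) *\<^sub>R vdir y"
  using assms unfolding resp_def Let_def by (auto split: if_splits)

text \<open>Moving agents land exactly on the decision boundary.\<close>

lemma lhat_resp_moved:
  assumes "resp c A y b \<noteq> A"
  shows "lhat c (resp c A y b) y b = 1"
proof -
  note mv = resp_moved[OF assms]
  have "y \<bullet> resp c A y b + b - 2 * norm y / c = 0"
    unfolding mv(4) using mv(1) by (simp add: inner_add_right inner_vdir field_simps)
  then show ?thesis by (simp add: lhat_def sign1_def)
qed

lemma proxy_on_boundary_if_moved:
  assumes "resp c A y b \<noteq> A" "lab A = 1"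
  shows "y \<bullet> proxy lab c A y b + b = 2 * norm y / c"
proof -
  note mv = resp_moved[OF assms(1)]
  have "proxy lab c A y b = resp c A y b" using mv assms(2) unfolding proxy_def Let_def by simp
  then show ?thesis
    unfolding mv(4) using mv(1) by (simp add: inner_add_right inner_vdir field_simps)
qed

lemma resp_fixed_outside_band:
  assumes "resp c A y b = A" "y \<noteq> 0"
  shows "\<not> (0 \<le> (y \<bullet> A + b) / norm y \<and> (y \<bullet> A + b) / norm y < 2 / c)"
proof
  let ?q = "(y \<bullet> A + b) / norm y"
  assume q: "0 \<le> ?q \<and> ?q < 2 / c"
  then have "(2 / c - ?q) *\<^sub>R vdir y = 0" using assms unfolding resp_def Let_def by simp
  moreover have "vdir y \<noteq> 0" using assms(2) by (simp add: vdir_def)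
  ultimately show False using q by simp
qed

lemma proxy_eq_if_resp_eq:
  assumes "resp c A y b = A"
  shows "proxy lab c A y b = A"
  using resp_fixed_outside_band[OF assms] unfolding proxy_def Let_def by auto

text \<open>Mistakes remain visible in the proxies; a moved negative agent's proxy lies exactly on
  the hyperplane \<open>y \<bullet> x + b = 0\<close>.\<close>

lemma mistake_proxy_misclassified:
  fixes A y :: "'a::euclidean_space"
  assumes c: "0 < c" and lA: "lab A = 1 \<or> lab A = -1"
    and mis: "lhat c (resp c A y b) y b \<noteq> lab A"
  shows "(lab A = 1 \<and> y \<bullet> proxy lab c A y b + b < 0) \<or> (lab A = -1 \<and> 0 \<le> y \<bullet> proxy lab c A y b + b)"
proof (cases "resp c A y b = A")
  case False
  note mv = resp_moved[OF False]
  have "lab A = -1" using lhat_resp_moved[OF False] mis lA by auto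
  then have "proxy lab c A y b = A - ((y \<bullet> A + b) / norm y) *\<^sub>R vdir y"
    using mv unfolding proxy_def Let_def by simp
  then have "y \<bullet> proxy lab c A y b + b = 0"
    using mv(1) by (simp add: inner_diff_right inner_vdir)
  then show ?thesis using \<open>lab A = -1\<close> by simp
next
  case True
  have p: "proxy lab c A y b = A" by (rule proxy_eq_if_resp_eq[OF True])
  have "lab A = 1 \<Longrightarrow> y \<bullet> A + b < 0"
  proof (cases "y = 0")
    case False
    let ?q = "(y \<bullet> A + b) / norm y"
    assume "lab A = 1"
    then have "y \<bullet> A + b < 2 * norm y / c"
      using mis True unfolding lhat_def sign1_def by (auto split: if_splits)
    then have "?q < 2 / c" using False by (simp add: field_simps)
    then have "?q < 0" using resp_fixed_outside_band[OF True False] by linarith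
    then show ?thesis using False by (simp add: divide_less_0_iff)
  qed (use mis True in \<open>auto simp: lhat_def sign1_def split: if_splits\<close>)
  moreover have "0 \<le> 2 * norm y / c" using c by simp
  then have "lab A = -1 \<Longrightarrow> 0 \<le> y \<bullet> A + b"
    using mis True unfolding lhat_def sign1_def by (auto split: if_splits)
  ultimately show ?thesis using lA p by auto
qed

section \<open>The separation function\<close>

text \<open>For \<open>W\<close> the set of differences of positive and negative points, \<open>inf_inner W v\<close> is
  twice the best margin attainable with normal vector \<open>v\<close>.\<close>

definition inf_inner :: "'a::real_inner set \<Rightarrow> 'a \<Rightarrow> real" where
  "inf_inner W v = Inf ((\<lambda>w. v \<bullet> w) ` W)"

lemma bdd_below_inner_image:
  fixes W :: "'a::real_inner set"
  assumes "bounded W"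
  shows "bdd_below ((\<lambda>w. v \<bullet> w) ` W)"
proof -
  obtain B where B: "\<And>w. w \<in> W \<Longrightarrow> norm w \<le> B" using assms by (auto simp: bounded_iff)
  show ?thesis
  proof (rule bdd_belowI2)
    fix w assume "w \<in> W"
    then have "\<bar>v \<bullet> w\<bar> \<le> norm v * B"
      using Cauchy_Schwarz_ineq2[of v w] B by (meson mult_left_mono norm_ge_zero order.trans)
    then show "- (norm v * B) \<le> v \<bullet> w" by linarith
  qed
qed

lemma bdd_above_inner_image:
  fixes W :: "'a::real_inner set"
  assumes "bounded W"
  shows "bdd_above ((\<lambda>w. v \<bullet> w) ` W)"
proof -
  obtain m where "\<forall>w\<in>W. m \<le> (- v) \<bullet> w"
    using bdd_below_inner_image[OF assms, of "- v"] by (auto simp: bdd_below_def)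
  then show ?thesis by (intro bdd_aboveI2[of _ _ "- m"]) auto
qed

lemma abs_inner_diff_le: "\<bar>v \<bullet> x - v \<bullet> x'\<bar> \<le> norm v * dist x x'"
  using Cauchy_Schwarz_ineq2[of v "x - x'"] by (simp add: inner_diff_right dist_norm)

lemma inf_inner_le: "bounded W \<Longrightarrow> w \<in> W \<Longrightarrow> inf_inner W v \<le> v \<bullet> w"
  unfolding inf_inner_def by (rule cInf_lower) (auto intro: bdd_below_inner_image)

lemma inf_inner_greatest: "W \<noteq> {} \<Longrightarrow> (\<And>w. w \<in> W \<Longrightarrow> k \<le> v \<bullet> w) \<Longrightarrow> k \<le> inf_inner W v"
  unfolding inf_inner_def by (rule cInf_greatest) auto

lemma inf_inner_zero: "W \<noteq> {} \<Longrightarrow> inf_inner W 0 = 0"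
  unfolding inf_inner_def by (simp add: image_constant_conv)

lemma inf_inner_scaleR:
  assumes "bounded W" "W \<noteq> {}" "0 \<le> s"
  shows "s * inf_inner W v \<le> inf_inner W (s *\<^sub>R v)"
  using assms by (intro inf_inner_greatest) (auto intro: mult_left_mono inf_inner_le)

lemma inf_inner_midpoint:
  assumes "bounded W" "W \<noteq> {}"
  shows "(inf_inner W v + inf_inner W v') / 2 \<le> inf_inner W ((1/2) *\<^sub>R (v + v'))"
proof (rule inf_inner_greatest[OF assms(2)])
  fix w assume "w \<in> W"
  then have "inf_inner W v \<le> v \<bullet> w" "inf_inner W v' \<le> v' \<bullet> w"
    using inf_inner_le[OF assms(1)] by auto
  then show "(inf_inner W v + inf_inner W v') / 2 \<le> ((1/2) *\<^sub>R (v + v')) \<bullet> w"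
    by (simp add: inner_add_left)
qed

lemma lipschitz_on_inf_inner:
  assumes "W \<noteq> {}" "\<And>w. w \<in> W \<Longrightarrow> norm w \<le> B"
  shows "B-lipschitz_on S (inf_inner W)"
proof (rule lipschitz_onI)
  have bW: "bounded W" using assms(2) by (auto simp: bounded_iff)
  have le: "inf_inner W v \<le> inf_inner W v' + B * norm (v - v')" for v v'
  proof -
    have "inf_inner W v - B * norm (v - v') \<le> v' \<bullet> w" if "w \<in> W" for w
    proof -
      have "\<bar>(v - v') \<bullet> w\<bar> \<le> norm (v - v') * B"
        using Cauchy_Schwarz_ineq2[of "v - v'" w] assms(2)[OF that]
        by (meson mult_left_mono norm_ge_zero order.trans)
      moreover have "inf_inner W v \<le> v \<bullet> w" using inf_inner_le[OF bW that] .
      ultimately show ?thesis by (simp add: inner_diff_left algebra_simps)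
    qed
    then have "inf_inner W v - B * norm (v - v') \<le> inf_inner W v'"
      by (rule inf_inner_greatest[OF assms(1)])
    then show ?thesis by linarith
  qed
  fix v v' show "dist (inf_inner W v) (inf_inner W v') \<le> B * dist v v'"
    using le[of v v'] le[of v' v] by (simp add: dist_real_def dist_norm norm_minus_commute abs_le_iff)
  obtain w where "w \<in> W" using assms(1) by blast
  then show "0 \<le> B" using assms(2) norm_ge_zero order.trans by blast
qed

lemma continuous_on_inf_inner:
  assumes "bounded W" "W \<noteq> {}"
  shows "continuous_on S (inf_inner W)"
proof -
  obtain B where "\<And>w. w \<in> W \<Longrightarrow> norm w \<le> B" using assms(1) by (auto simp: bounded_iff)
  then show ?thesis by (rule lipschitz_on_continuous_on[OF lipschitz_on_inf_inner[OF assms(2)]])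
qed

text \<open>Since \<open>inf_inner W\<close> is positively homogeneous, a positive maximum over the unit
  ball can only be attained on the sphere; concavity then forces the maximiser to be unique.\<close>

lemma inf_inner_argmax_norm:
  assumes W: "bounded W" "W \<noteq> {}"
    and max: "\<And>v'. norm v' \<le> 1 \<Longrightarrow> inf_inner W v' \<le> M" and "0 < M"
    and v: "norm v \<le> 1" "M \<le> inf_inner W v"
  shows "norm v = 1"
proof (rule ccontr)
  assume "norm v \<noteq> 1"
  then have "norm v < 1" using v(1) by simp
  have "v \<noteq> 0" using v(2) \<open>0 < M\<close> inf_inner_zero[OF W(2)] by auto
  then have "0 < norm v" by simp
  have "M < (1 / norm v) * M" using \<open>norm v < 1\<close> \<open>0 < norm v\<close> \<open>0 < M\<close> by (simp add: field_simps)
  also have "\<dots> \<le> (1 / norm v) * inf_inner W v" using v(2) \<open>0 < norm v\<close> by (simp add: divide_right_mono)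
  also have "\<dots> \<le> inf_inner W ((1 / norm v) *\<^sub>R v)" by (rule inf_inner_scaleR[OF W]) simp
  also have "\<dots> \<le> M" using \<open>0 < norm v\<close> by (intro max) simp
  finally show False by simp
qed

lemma inf_inner_argmax_unique:
  assumes W: "bounded W" "W \<noteq> {}"
    and max: "\<And>v'. norm v' \<le> 1 \<Longrightarrow> inf_inner W v' \<le> M" and "0 < M"
    and v: "norm v \<le> 1" "M \<le> inf_inner W v" and v': "norm v' \<le> 1" "M \<le> inf_inner W v'"
  shows "v = v'"
proof -
  define m where "m = (1/2) *\<^sub>R (v + v')"
  have nv: "norm v = 1" "norm v' = 1" using inf_inner_argmax_norm[OF W max \<open>0 < M\<close>] v v' by auto
  have "M \<le> (inf_inner W v + inf_inner W v') / 2" using v(2) v'(2) by (simp add: field_simps)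
  also have "\<dots> \<le> inf_inner W m" unfolding m_def by (rule inf_inner_midpoint[OF W])
  finally have "M \<le> inf_inner W m" .
  moreover have "norm m \<le> 1"
    using norm_triangle_ineq[of v v'] nv unfolding m_def by simp
  ultimately have "norm m = 1" using inf_inner_argmax_norm[OF W max \<open>0 < M\<close>] by blast
  moreover have "(norm (v + v'))\<^sup>2 + (norm (v - v'))\<^sup>2 = 2 * (norm v)\<^sup>2 + 2 * (norm v')\<^sup>2"
    unfolding power2_norm_eq_inner
    by (simp add: inner_add_left inner_add_right inner_diff_left inner_diff_right inner_commute)
  ultimately have "(norm (v - v'))\<^sup>2 = 0" using nv unfolding m_def by (simp add: power2_eq_square)
  then show ?thesis by simp
qed

lemma compact_unique_argmax_approx:
  fixes f :: "'a::metric_space \<Rightarrow> real"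
  assumes "compact K" "continuous_on K f" "x0 \<in> K"
    and unique: "\<And>x. x \<in> K \<Longrightarrow> f x0 \<le> f x \<Longrightarrow> x = x0" and "0 < e"
  shows "\<exists>\<eta>>0. \<forall>x\<in>K. f x0 - \<eta> < f x \<longrightarrow> dist x x0 < e"
proof -
  define K' where "K' = K \<inter> {x. e \<le> dist x x0}"
  have "compact K'" unfolding K'_def
    by (intro compact_Int_closed assms(1) closed_Collect_le continuous_intros)
  show ?thesis
  proof (cases "K' = {}")
    case True
    then show ?thesis unfolding K'_def by (intro exI[of _ 1]) force
  next
    case False
    obtain x1 where x1: "x1 \<in> K'" "\<And>x. x \<in> K' \<Longrightarrow> f x \<le> f x1"
      using continuous_attains_sup[OF \<open>compact K'\<close> False
          continuous_on_subset[OF assms(2)]] unfolding K'_def by blast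
    have "f x1 < f x0"
      using unique[of x1] x1(1) \<open>0 < e\<close> unfolding K'_def by force
    then show ?thesis
      using x1(2) unfolding K'_def by (intro exI[of _ "f x0 - f x1"]) force
  qed
qed

lemma incseq_Union_eventually_dense:
  fixes S :: "nat \<Rightarrow> 'a::euclidean_space set"
  assumes "bounded (\<Union>t. S t)" and mono: "\<And>t t'. t \<le> t' \<Longrightarrow> S t \<subseteq> S t'" and "0 < \<delta>"
  shows "\<exists>T. \<forall>t\<ge>T. \<forall>x\<in>(\<Union>t. S t). \<exists>x'\<in>S t. dist x x' < \<delta>"
proof -
  let ?U = "\<Union>t. S t"
  have "compact (closure ?U)" using assms(1) by (simp add: compact_closure)
  moreover have "closure ?U \<subseteq> (\<Union>x\<in>?U. ball x \<delta>)"
  proof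
    fix p assume "p \<in> closure ?U"
    then obtain x where "x \<in> ?U" "dist x p < \<delta>" using \<open>0 < \<delta>\<close> closure_approachable by blast
    then show "p \<in> (\<Union>x\<in>?U. ball x \<delta>)" by auto
  qed
  ultimately obtain C where C: "C \<subseteq> ?U" "finite C" "closure ?U \<subseteq> (\<Union>x\<in>C. ball x \<delta>)"
    using compactE_image[of "closure ?U" ?U "\<lambda>x. ball x \<delta>"] by blast
  have "\<forall>x\<in>C. \<exists>t. x \<in> S t" using C(1) by blast
  then obtain tx where tx: "\<And>x. x \<in> C \<Longrightarrow> x \<in> S (tx x)" by metis
  define T where "T = Max (insert 0 (tx ` C))"
  have inS: "x \<in> S t" if "x \<in> C" "T \<le> t" for x t
  proof -
    have "tx x \<le> T" unfolding T_def using C(2) that(1) by (intro Max_ge) auto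
    then show ?thesis using tx[OF that(1)] mono that(2) by (meson order.trans subsetD)
  qed
  show ?thesis
  proof (intro exI[of _ T] allI impI ballI)
    fix t x assume "T \<le> t" "x \<in> ?U"
    then obtain c where "c \<in> C" "x \<in> ball c \<delta>" using C(3) closure_subset by blast
    then show "\<exists>x'\<in>S t. dist x x' < \<delta>" using inS[OF _ \<open>T \<le> t\<close>] by (auto simp: dist_commute)
  qed
qed

lemma sum_inverse_sqrt_ge: "1 \<le> T \<Longrightarrow> sqrt (real T) \<le> (\<Sum>t=1..T. 1 / sqrt (real t))"
proof -
  assume "1 \<le> T"
  have "\<forall>t\<in>{1..T}. 1 / sqrt (real T) \<le> 1 / sqrt (real t)"
    by (auto intro!: divide_left_mono mult_pos_pos)
  then have "real (card {1..T}) * (1 / sqrt (real T)) \<le> (\<Sum>t=1..T. 1 / sqrt (real t))"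
    by (intro sum_bounded_below) blast
  moreover have "real (card {1..T}) * (1 / sqrt (real T)) = sqrt (real T)"
    using \<open>1 \<le> T\<close> by (simp add: real_div_sqrt)
  ultimately show ?thesis by simp
qed

lemma sum_weighted_le_head_plus_tail:
  fixes a g :: "nat \<Rightarrow> real"
  assumes "\<And>t. 0 \<le> g t" "\<And>t. T0 < t \<Longrightarrow> a t \<le> \<epsilon>" "0 \<le> \<epsilon>" "T0 \<le> T"
  shows "(\<Sum>t=1..T. g t * a t) \<le> (\<Sum>t=1..T0. g t * \<bar>a t\<bar>) + \<epsilon> * (\<Sum>t=1..T. g t)"
proof -
  have "g t * a t \<le> (if t \<le> T0 then g t * \<bar>a t\<bar> else 0) + \<epsilon> * g t" for t
  proof (cases "t \<le> T0")
    case True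
    have "g t * a t \<le> g t * \<bar>a t\<bar>" using assms(1) by (intro mult_left_mono) auto
    moreover have "0 \<le> \<epsilon> * g t" using assms(1,3) by simp
    ultimately show ?thesis using True by simp
  next
    case False
    then have "g t * a t \<le> g t * \<epsilon>" using assms(1,2) by (intro mult_left_mono) auto
    then show ?thesis using False by (simp add: mult.commute)
  qed
  then have "(\<Sum>t=1..T. g t * a t) \<le> (\<Sum>t=1..T. (if t \<le> T0 then g t * \<bar>a t\<bar> else 0) + \<epsilon> * g t)"
    by (intro sum_mono)
  also have "\<dots> = (\<Sum>t\<in>{1..T} \<inter> {t. t \<le> T0}. g t * \<bar>a t\<bar>) + \<epsilon> * (\<Sum>t=1..T. g t)"
    by (simp add: sum.distrib sum_distrib_left sum.inter_restrict)
  also have "{1..T} \<inter> {t. t \<le> T0} = {1..T0}" using assms(4) by auto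
  finally show ?thesis .
qed

text \<open>Averages with the weights \<open>1/\<surd>t\<close> forget any fixed head, since the total weight
  grows like \<open>\<surd>T\<close>.\<close>

lemma inverse_sqrt_weighted_average_le:
  fixes a :: "nat \<Rightarrow> real"
  assumes ev: "\<And>\<epsilon>. 0 < \<epsilon> \<Longrightarrow> \<exists>T. \<forall>t\<ge>T. a t \<le> \<epsilon>" and "0 < \<epsilon>"
  shows "\<exists>T. \<forall>T'\<ge>T. (C + (\<Sum>t=1..T'. a t / sqrt (real t))) / (\<Sum>t=1..T'. 1 / sqrt (real t)) \<le> \<epsilon>"
proof -
  define g where "g t = 1 / sqrt (real t)" for t :: nat
  obtain T0 where T0: "\<forall>t\<ge>T0. a t \<le> \<epsilon> / 2" using ev[of "\<epsilon> / 2"] \<open>0 < \<epsilon>\<close> by auto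
  define C0 where "C0 = (\<Sum>t=1..T0. g t * \<bar>a t\<bar>)"
  define K where "K = 2 * max (C + C0) 0 / \<epsilon>"
  have "0 \<le> K" unfolding K_def using \<open>0 < \<epsilon>\<close> by simp
  show ?thesis
  proof (intro exI[of _ "max T0 (max 1 (nat \<lceil>K\<^sup>2\<rceil>))"] allI impI)
    fix T assume "max T0 (max 1 (nat \<lceil>K\<^sup>2\<rceil>)) \<le> T"
    then have "1 \<le> T" "T0 \<le> T" "K\<^sup>2 \<le> real T" by (auto simp: nat_le_iff ceiling_le_iff)
    define S where "S = (\<Sum>t=1..T. g t)"
    have "K \<le> sqrt (real T)" using \<open>K\<^sup>2 \<le> real T\<close> \<open>0 \<le> K\<close> real_le_rsqrt by blast
    also have "\<dots> \<le> S" unfolding S_def g_def by (rule sum_inverse_sqrt_ge[OF \<open>1 \<le> T\<close>])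
    finally have "K \<le> S" .
    have "0 < S" using \<open>1 \<le> T\<close> unfolding S_def g_def by (intro sum_pos) auto
    have "(\<Sum>t=1..T. g t * a t) \<le> C0 + \<epsilon> / 2 * S"
      unfolding C0_def S_def using T0 \<open>0 < \<epsilon>\<close> \<open>T0 \<le> T\<close>
      by (intro sum_weighted_le_head_plus_tail) (auto simp: g_def)
    moreover have "C + C0 \<le> \<epsilon> / 2 * S"
    proof -
      have "\<epsilon> / 2 * K = max (C + C0) 0" unfolding K_def using \<open>0 < \<epsilon>\<close> by simp
      moreover have "\<epsilon> / 2 * K \<le> \<epsilon> / 2 * S" using \<open>K \<le> S\<close> \<open>0 < \<epsilon>\<close> by simp
      ultimately show ?thesis by linarith
    qed
    ultimately have "C + (\<Sum>t=1..T. g t * a t) \<le> \<epsilon> * S" by linarith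
    then show "(C + (\<Sum>t=1..T. a t / sqrt (real t))) / (\<Sum>t=1..T. 1 / sqrt (real t)) \<le> \<epsilon>"
      using \<open>0 < S\<close> unfolding S_def g_def by (simp add: divide_le_eq mult.commute)
  qed
qed

lemma eventually_inner_close:
  fixes f :: "nat \<Rightarrow> 'a::real_inner"
  assumes "f \<longlonglongrightarrow> v" "0 < r"
  shows "\<forall>\<^sub>F t in sequentially. \<forall>x. norm x \<le> R \<longrightarrow> \<bar>f t \<bullet> x - v \<bullet> x\<bar> < r"
proof -
  have "0 < r / (\<bar>R\<bar> + 1)" using assms(2) by simp
  with tendstoD[OF assms(1)] have "\<forall>\<^sub>F t in sequentially. dist (f t) v < r / (\<bar>R\<bar> + 1)" .
  then show ?thesis
  proof (rule eventually_mono, intro allI impI)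
    fix t and x :: 'a assume "dist (f t) v < r / (\<bar>R\<bar> + 1)" "norm x \<le> R"
    then have "norm (f t - v) * (\<bar>R\<bar> + 1) < r" by (simp add: dist_norm field_simps)
    moreover have "\<bar>f t \<bullet> x - v \<bullet> x\<bar> \<le> norm (f t - v) * norm x"
      using Cauchy_Schwarz_ineq2[of "f t - v" x] by (simp add: inner_diff_left)
    moreover have "norm (f t - v) * norm x \<le> norm (f t - v) * (\<bar>R\<bar> + 1)"
      using \<open>norm x \<le> R\<close> by (intro mult_left_mono) auto
    ultimately show "\<bar>f t \<bullet> x - v \<bullet> x\<bar> < r" by linarith
  qed
qed

lemma eventually_Inf_inner_less_Min:
  fixes S :: "nat \<Rightarrow> 'a::euclidean_space set" and f :: "nat \<Rightarrow> 'a"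
  assumes fin: "\<And>t. finite (S t)" and ne: "\<And>t. S t \<noteq> {}" and sub: "\<And>t. S t \<subseteq> U"
    and bnd: "\<And>x. x \<in> U \<Longrightarrow> norm x \<le> R" and "f \<longlonglongrightarrow> v" "0 < r"
  shows "\<forall>\<^sub>F t in sequentially. Inf ((\<lambda>x. v \<bullet> x) ` U) - r < Min ((\<lambda>x. f t \<bullet> x) ` S t)"
  using eventually_inner_close[OF assms(5,6), of R]
proof (rule eventually_mono)
  fix t assume close: "\<forall>x. norm x \<le> R \<longrightarrow> \<bar>f t \<bullet> x - v \<bullet> x\<bar> < r"
  have "Inf ((\<lambda>x. v \<bullet> x) ` U) - r < f t \<bullet> x" if "x \<in> S t" for x
  proof -
    have "x \<in> U" using sub that by blast
    then have "Inf ((\<lambda>x. v \<bullet> x) ` U) \<le> v \<bullet> x"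
      using bnd by (intro cInf_lower bdd_below_inner_image) (auto simp: bounded_iff)
    then show ?thesis using close bnd[OF \<open>x \<in> U\<close>] by force
  qed
  then show "Inf ((\<lambda>x. v \<bullet> x) ` U) - r < Min ((\<lambda>x. f t \<bullet> x) ` S t)"
    using fin ne by (simp add: Min_gr_iff)
qed

lemma eventually_Min_inner_less_Inf:
  fixes S :: "nat \<Rightarrow> 'a::euclidean_space set" and f :: "nat \<Rightarrow> 'a"
  assumes fin: "\<And>t. finite (S t)" and sub: "\<And>t. S t \<subseteq> U"
    and bnd: "\<And>x. x \<in> U \<Longrightarrow> norm x \<le> R" and "U \<noteq> {}"
    and dense: "\<And>\<delta>. 0 < \<delta> \<Longrightarrow> \<exists>T. \<forall>t\<ge>T. \<forall>x\<in>U. \<exists>x'\<in>S t. dist x x' < \<delta>"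
    and "f \<longlonglongrightarrow> v" "0 < r"
  shows "\<forall>\<^sub>F t in sequentially. Min ((\<lambda>x. f t \<bullet> x) ` S t) < Inf ((\<lambda>x. v \<bullet> x) ` U) + r"
proof -
  let ?m = "Inf ((\<lambda>x. v \<bullet> x) ` U)"
  have "bounded U" using bnd by (auto simp: bounded_iff)
  have "?m < ?m + r / 3" using \<open>0 < r\<close> by simp
  then obtain x0 where "x0 \<in> U" "v \<bullet> x0 < ?m + r / 3"
    using cInf_less_iff[OF _ bdd_below_inner_image[OF \<open>bounded U\<close>]] \<open>U \<noteq> {}\<close> by blast
  define V where "V = norm v + 1"
  have "0 < V" unfolding V_def by (simp add: add_nonneg_pos)
  then have "0 < r / (3 * V)" using \<open>0 < r\<close> by simp
  then obtain T where T: "\<And>t. T \<le> t \<Longrightarrow> \<exists>x'\<in>S t. dist x0 x' < r / (3 * V)"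
    using dense \<open>x0 \<in> U\<close> by blast
  have "\<forall>\<^sub>F t in sequentially. T \<le> t \<and> (\<forall>x. norm x \<le> R \<longrightarrow> \<bar>f t \<bullet> x - v \<bullet> x\<bar> < r / 3)"
    using eventually_inner_close[OF assms(6), of "r / 3" R] \<open>0 < r\<close>
    by (auto intro: eventually_conj simp: eventually_ge_at_top)
  then show ?thesis
  proof (rule eventually_mono)
    fix t assume t: "T \<le> t \<and> (\<forall>x. norm x \<le> R \<longrightarrow> \<bar>f t \<bullet> x - v \<bullet> x\<bar> < r / 3)"
    then obtain x' where "x' \<in> S t" "dist x0 x' < r / (3 * V)" using T by blast
    have "\<bar>v \<bullet> x0 - v \<bullet> x'\<bar> \<le> norm v * dist x0 x'" by (rule abs_inner_diff_le)
    also have "\<dots> \<le> V * (r / (3 * V))"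
      using \<open>dist x0 x' < r / (3 * V)\<close> unfolding V_def by (intro mult_mono) auto
    also have "\<dots> = r / 3" using \<open>0 < V\<close> by simp
    finally have "v \<bullet> x' < ?m + 2 * r / 3" using \<open>v \<bullet> x0 < ?m + r / 3\<close> by linarith
    moreover have "norm x' \<le> R" using bnd sub \<open>x' \<in> S t\<close> by blast
    then have "\<bar>f t \<bullet> x' - v \<bullet> x'\<bar> < r / 3" using t by blast
    then have "f t \<bullet> x' < v \<bullet> x' + r / 3" by linarith
    moreover have "Min ((\<lambda>x. f t \<bullet> x) ` S t) \<le> f t \<bullet> x'" using fin \<open>x' \<in> S t\<close> by simp
    ultimately show "Min ((\<lambda>x. f t \<bullet> x) ` S t) < ?m + r" by linarith
  qed
qed

lemma Min_inner_tendsto_Inf: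
  fixes S :: "nat \<Rightarrow> 'a::euclidean_space set" and f :: "nat \<Rightarrow> 'a"
  assumes "\<And>t. finite (S t)" "\<And>t. S t \<noteq> {}" "\<And>t. S t \<subseteq> U" "\<And>x. x \<in> U \<Longrightarrow> norm x \<le> R"
    and "\<And>\<delta>. 0 < \<delta> \<Longrightarrow> \<exists>T. \<forall>t\<ge>T. \<forall>x\<in>U. \<exists>x'\<in>S t. dist x x' < \<delta>"
    and "f \<longlonglongrightarrow> v"
  shows "(\<lambda>t. Min ((\<lambda>x. f t \<bullet> x) ` S t)) \<longlonglongrightarrow> Inf ((\<lambda>x. v \<bullet> x) ` U)"
proof (rule tendstoI)
  fix r :: real assume "0 < r"
  have "U \<noteq> {}" using assms(2,3) by blast
  have "\<forall>\<^sub>F t in sequentially. Inf ((\<lambda>x. v \<bullet> x) ` U) - r < Min ((\<lambda>x. f t \<bullet> x) ` S t)"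
    by (rule eventually_Inf_inner_less_Min[of S U R f v r]) (use assms \<open>0 < r\<close> in auto)
  moreover have "\<forall>\<^sub>F t in sequentially. Min ((\<lambda>x. f t \<bullet> x) ` S t) < Inf ((\<lambda>x. v \<bullet> x) ` U) + r"
    by (rule eventually_Min_inner_less_Inf[of S U R f v r]) (use assms \<open>0 < r\<close> \<open>U \<noteq> {}\<close> in auto)
  ultimately show "\<forall>\<^sub>F t in sequentially. dist (Min ((\<lambda>x. f t \<bullet> x) ` S t)) (Inf ((\<lambda>x. v \<bullet> x) ` U)) < r"
    by eventually_elim (simp add: dist_real_def abs_less_iff)
qed

lemma Max_inner_image_eq_uminus_Min:
  assumes "finite S" "S \<noteq> {}"
  shows "Max ((\<lambda>x. f \<bullet> x) ` S) = - Min ((\<lambda>x. (- f) \<bullet> x) ` S)"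
proof (rule Max_eqI)
  show "finite ((\<lambda>x. f \<bullet> x) ` S)" using assms(1) by simp
  show "y \<le> - Min ((\<lambda>x. (- f) \<bullet> x) ` S)" if y: "y \<in> (\<lambda>x. f \<bullet> x) ` S" for y
  proof -
    obtain x where "x \<in> S" "y = f \<bullet> x" using y by blast
    then have "Min ((\<lambda>x. (- f) \<bullet> x) ` S) \<le> (- f) \<bullet> x" using assms(1) by (intro Min_le) auto
    then show ?thesis using \<open>y = f \<bullet> x\<close> by simp
  qed
  have "Min ((\<lambda>x. (- f) \<bullet> x) ` S) \<in> (\<lambda>x. (- f) \<bullet> x) ` S" using assms by (intro Min_in) auto
  then show "- Min ((\<lambda>x. (- f) \<bullet> x) ` S) \<in> (\<lambda>x. f \<bullet> x) ` S" by auto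
qed

lemma Sup_inner_image_eq_uminus_Inf: "Sup ((\<lambda>x. v \<bullet> x) ` U) = - Inf ((\<lambda>x. (- v) \<bullet> x) ` U)"
  unfolding Inf_real_def by (simp add: image_image)

section \<open>Independent samples are dense in the support\<close>

lemma prob_iid_avoids_block:
  fixes X :: "nat \<Rightarrow> 'w \<Rightarrow> 'a::euclidean_space"
  assumes M: "prob_space M" and ind: "prob_space.indep_vars M (\<lambda>_. borel) X UNIV"
    and dst: "\<forall>i. distr M borel (X i) = P" and sP: "sets P = sets borel" and PP: "prob_space P"
    and C: "C \<in> sets borel"
  shows "measure M (\<Inter>i\<in>{n..n + m}. X i -` (- C) \<inter> space M) = (1 - measure P C) ^ Suc m"
proof -
  interpret prob_space M by (rule M)
  have Xm: "X i \<in> borel_measurable M" for i using ind unfolding indep_vars_def2 by auto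
  have "space P = UNIV" using sets_eq_imp_space_eq[OF sP] by simp
  have avoid: "measure M (X i -` (- C) \<inter> space M) = 1 - measure P C" for i
  proof -
    have "measure M (X i -` (- C) \<inter> space M) = measure (distr M borel (X i)) (- C)"
      using C by (intro measure_distr[symmetric] Xm) auto
    also have "\<dots> = measure P (space P - C)" using dst \<open>space P = UNIV\<close> by (simp add: Compl_eq_Diff_UNIV)
    also have "\<dots> = 1 - measure P C" using C sP by (intro prob_space.prob_compl[OF PP]) simp
    finally show ?thesis .
  qed
  have "measure M (\<Inter>i\<in>{n..n + m}. X i -` (- C) \<inter> space M)
      = (\<Prod>i\<in>{n..n + m}. measure M (X i -` (- C) \<inter> space M))"
    using C by (intro indep_varsD[OF ind]) auto
  also have "\<dots> = (1 - measure P C) ^ Suc m" using avoid by simp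
  finally show ?thesis .
qed

lemma AE_iid_visits_set:
  fixes X :: "nat \<Rightarrow> 'w \<Rightarrow> 'a::euclidean_space"
  assumes M: "prob_space M" and ind: "prob_space.indep_vars M (\<lambda>_. borel) X UNIV"
    and dst: "\<forall>i. distr M borel (X i) = P" and sP: "sets P = sets borel" and PP: "prob_space P"
    and C: "C \<in> sets borel" and pos: "0 < measure P C"
  shows "AE \<omega> in M. \<exists>i\<ge>n. X i \<omega> \<in> C"
proof -
  interpret prob_space M by (rule M)
  have Xm: "X i \<in> borel_measurable M" for i using ind unfolding indep_vars_def2 by auto
  define E where "E = {\<omega> \<in> space M. \<not> (\<exists>i\<ge>n. X i \<omega> \<in> C)}"
  have "E \<in> sets M" unfolding E_def using Xm C by measurable
  have "measure M E \<le> (1 - measure P C) ^ Suc m" for m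
  proof -
    have "- C \<in> sets borel" using C by auto
    then have "(\<Inter>i\<in>{n..n + m}. X i -` (- C) \<inter> space M) \<in> sets M"
      using measurable_sets[OF Xm] by (intro sets.finite_INT) auto
    moreover have "E \<subseteq> (\<Inter>i\<in>{n..n + m}. X i -` (- C) \<inter> space M)" unfolding E_def by auto
    ultimately have "measure M E \<le> measure M (\<Inter>i\<in>{n..n + m}. X i -` (- C) \<inter> space M)"
      by (intro finite_measure_mono)
    then show ?thesis unfolding prob_iid_avoids_block[OF M ind dst sP PP C] .
  qed
  moreover have "(\<lambda>m. (1 - measure P C) ^ Suc m) \<longlonglongrightarrow> 0"
    using pos prob_space.prob_le_1[OF PP, of C]
    by (intro LIMSEQ_Suc LIMSEQ_power_zero) simp
  ultimately have "measure M E \<le> 0" by (intro LIMSEQ_le_const[of _ 0]) auto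
  then have "emeasure M E = 0" using measure_nonneg[of M E] by (simp add: emeasure_eq_measure)
  then show ?thesis using AE_iff_measurable[OF \<open>E \<in> sets M\<close>] unfolding E_def by simp
qed

text \<open>A countable base reduces density to visiting countably many open sets, each of
  positive probability.\<close>

lemma AE_iid_dense_in_support:
  fixes X :: "nat \<Rightarrow> 'w \<Rightarrow> 'a::euclidean_space"
  assumes M: "prob_space M" and ind: "prob_space.indep_vars M (\<lambda>_. borel) X UNIV"
    and dst: "\<forall>i. distr M borel (X i) = P" and sP: "sets P = sets borel" and PP: "prob_space P"
    and supp: "\<forall>A\<in>AS. \<forall>e>0. measure P (cball A e) > 0"
  shows "AE \<omega> in M. \<forall>A\<in>AS. \<forall>e>0. \<forall>n. \<exists>i\<ge>n. dist A (X i \<omega>) < e"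
proof -
  obtain B :: "'a set set" where B: "countable B" "\<And>C. C \<in> B \<Longrightarrow> open C"
    "\<And>S. open S \<Longrightarrow> \<exists>U. U \<subseteq> B \<and> S = \<Union>U"
    using univ_second_countable by blast
  define B' where "B' = {C \<in> B. C \<inter> AS \<noteq> {}}"
  have "countable B'" unfolding B'_def using B(1) by simp
  have "0 < measure P C" if C: "C \<in> B'" for C
  proof -
    obtain A where "A \<in> C" "A \<in> AS" using C unfolding B'_def by blast
    have "open C" using C B(2) unfolding B'_def by blast
    then obtain e where "0 < e" "cball A e \<subseteq> C" using \<open>A \<in> C\<close> open_contains_cball by blast
    have "measure P (cball A e) \<le> measure P C"
      using \<open>cball A e \<subseteq> C\<close> \<open>open C\<close> sP
      by (intro finite_measure.finite_measure_mono[OF prob_space.finite_measure[OF PP]]) auto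
    then show ?thesis using supp \<open>A \<in> AS\<close> \<open>0 < e\<close> by (meson less_le_trans)
  qed
  then have "\<forall>C\<in>B'. \<forall>n. AE \<omega> in M. \<exists>i\<ge>n. X i \<omega> \<in> C"
    using AE_iid_visits_set[OF M ind dst sP PP] B(2) unfolding B'_def by auto
  then have "AE \<omega> in M. \<forall>C\<in>B'. \<forall>n. \<exists>i\<ge>n. X i \<omega> \<in> C"
    by (simp add: AE_all_countable AE_ball_countable[OF \<open>countable B'\<close>])
  then show ?thesis
  proof (rule eventually_mono, intro ballI allI impI)
    fix \<omega> A e n assume visits: "\<forall>C\<in>B'. \<forall>n. \<exists>i\<ge>n. X i \<omega> \<in> C" and "A \<in> AS" "(0::real) < e"
    obtain U where U: "U \<subseteq> B" "ball A e = \<Union>U" using B(3)[of "ball A e"] by auto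
    then obtain C where "C \<in> U" "A \<in> C" using \<open>0 < e\<close> by (metis UnionE centre_in_ball)
    then have "C \<in> B'" using U \<open>A \<in> AS\<close> unfolding B'_def by blast
    then obtain i where "n \<le> i" "X i \<omega> \<in> C" using visits by blast
    moreover have "X i \<omega> \<in> ball A e" using \<open>X i \<omega> \<in> C\<close> \<open>C \<in> U\<close> U(2) by blast
    ultimately show "\<exists>i\<ge>n. dist A (X i \<omega>) < e" by auto
  qed
qed

section \<open>Analysis of a run\<close>

text \<open>Notation: \<open>d\<close> is the optimal margin \<open>d\<^sub>*\<close>, \<open>(u, \<beta>) = (ys, bs) / norm ys\<close> the
  normalised maximiser, \<open>R\<close> bounds all agents and proxies, and \<open>P t\<close>, \<open>Q t\<close> are the
  proxy sets \<open>A\<^sub>t\<^sup>+\<close>, \<open>A\<^sub>t\<^sup>-\<close> of the algorithm.\<close>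

locale smm_analysis =
  fixes AS :: "'a::euclidean_space set" and lab :: "'a \<Rightarrow> int" and c :: real
    and ys :: 'a and bs :: real and a :: "nat \<Rightarrow> 'a" and N :: nat
    and y :: "nat \<Rightarrow> 'a" and b :: "nat \<Rightarrow> real" and z :: "nat \<Rightarrow> 'a"
  assumes c_pos: "0 < c"
    and labels: "\<forall>A\<in>AS. lab A \<in> {-1, 1}"
    and ys_nonzero: "ys \<noteq> 0"
    and margin_max: "\<forall>y b. y \<noteq> 0 \<longrightarrow> smargin AS lab y b \<le> smargin AS lab ys bs"
    and margin_pos: "0 < smargin AS lab ys bs"
    and bounded_AS: "bounded AS"
    and run: "smm_run AS lab c (\<lambda>t. 1 / sqrt (real t)) a N y b z"
begin

definition "\<gamma> t = 1 / sqrt (real t)"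
definition "d = smargin AS lab ys bs"
definition "u = ys /\<^sub>R norm ys"
definition "\<beta> = bs / norm ys"
definition "R = (SUP A\<in>AS. norm A) + 2 / c"

abbreviation "P t \<equiv> Apos lab c a N y b t"
abbreviation "Q t \<equiv> Aneg lab c a N y b t"

lemma d_pos: "0 < d" using margin_pos by (simp add: d_def)
lemma norm_u: "norm u = 1" using ys_nonzero by (simp add: u_def)
lemma gamma_pos: "1 \<le> t \<Longrightarrow> 0 < \<gamma> t" by (simp add: \<gamma>_def)

lemma a_in_AS: "a i \<in> AS" using run by (simp add: smm_run_def)
lemma lab_a: "lab (a i) = 1 \<or> lab (a i) = -1" using labels a_in_AS[of i] by auto
lemma init: "init_stop lab a N" using run by (simp add: smm_run_def)
lemma norm_y1: "norm (y 1) \<le> 1" using run by (simp add: smm_run_def)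
lemma y1_argmax: "norm v \<le> 1 \<Longrightarrow> hmarg v \<beta>' (P 0) (Q 0) \<le> hmarg (y 1) (b 1) (P 0) (Q 0)"
  using run by (simp add: smm_run_def)
lemma z1: "z 1 = y 1" using run by (simp add: smm_run_def)
lemma z_step: "1 \<le> t \<Longrightarrow> \<exists>sp sm.
    sp \<in> P t \<and> (\<forall>x\<in>P t. z t \<bullet> sp \<le> z t \<bullet> x) \<and>
    sm \<in> Q t \<and> (\<forall>x\<in>Q t. z t \<bullet> x \<le> z t \<bullet> sm) \<and>
    z (Suc t) = closest_point (cball 0 1) (z t + \<gamma> t *\<^sub>R (sp - sm))"
  using run unfolding smm_run_def \<gamma>_def by blast
lemma y_Suc: "1 \<le> t \<Longrightarrow> y (Suc t) = (\<Sum>\<tau>=1..Suc t. \<gamma> \<tau> *\<^sub>R z \<tau>) /\<^sub>R (\<Sum>\<tau>=1..Suc t. \<gamma> \<tau>)"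
  using run unfolding smm_run_def \<gamma>_def by blast
lemma b_Suc: "1 \<le> t \<Longrightarrow> b (Suc t) = - (1/2) *
    (Min ((\<lambda>x. y (Suc t) \<bullet> x) ` P t) + Max ((\<lambda>x. y (Suc t) \<bullet> x) ` Q t))"
  using run unfolding smm_run_def by blast

lemma P_iff: "x \<in> P t \<longleftrightarrow> (\<exists>i\<le>N. x = a i \<and> lab (a i) = 1) \<or>
    (\<exists>\<tau>. 1 \<le> \<tau> \<and> \<tau> \<le> t \<and> lab (a (N+\<tau>)) = 1 \<and> x = proxy lab c (a (N+\<tau>)) (y \<tau>) (b \<tau>))"
  unfolding Apos_def by blast
lemma Q_iff: "x \<in> Q t \<longleftrightarrow> (\<exists>i\<le>N. x = a i \<and> lab (a i) = -1) \<or>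
    (\<exists>\<tau>. 1 \<le> \<tau> \<and> \<tau> \<le> t \<and> lab (a (N+\<tau>)) = -1 \<and> x = proxy lab c (a (N+\<tau>)) (y \<tau>) (b \<tau>))"
  unfolding Aneg_def by blast

lemma proxy_in_P: "1 \<le> t \<Longrightarrow> lab (a (N+t)) = 1 \<Longrightarrow> proxy lab c (a (N+t)) (y t) (b t) \<in> P t"
  unfolding P_iff by blast
lemma proxy_in_Q: "1 \<le> t \<Longrightarrow> lab (a (N+t)) = -1 \<Longrightarrow> proxy lab c (a (N+t)) (y t) (b t) \<in> Q t"
  unfolding Q_iff by blast

lemma finite_P: "finite (P t)"
proof -
  have "P t \<subseteq> a ` {..N} \<union> (\<lambda>\<tau>. proxy lab c (a (N+\<tau>)) (y \<tau>) (b \<tau>)) ` {1..t}"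
    unfolding Apos_def by auto
  then show ?thesis by (rule finite_subset) auto
qed

lemma finite_Q: "finite (Q t)"
proof -
  have "Q t \<subseteq> a ` {..N} \<union> (\<lambda>\<tau>. proxy lab c (a (N+\<tau>)) (y \<tau>) (b \<tau>)) ` {1..t}"
    unfolding Aneg_def by auto
  then show ?thesis by (rule finite_subset) auto
qed

lemma P_nonempty: "P t \<noteq> {}"
  using init unfolding init_stop_def both_seen_def Apos_def by blast
lemma Q_nonempty: "Q t \<noteq> {}"
  using init unfolding init_stop_def both_seen_def Aneg_def by blast

lemma P_mono: "t \<le> t' \<Longrightarrow> P t \<subseteq> P t'" unfolding Apos_def by auto
lemma Q_mono: "t \<le> t' \<Longrightarrow> Q t \<subseteq> Q t'" unfolding Aneg_def by auto

lemma P0_subset: "x \<in> P 0 \<Longrightarrow> x \<in> AS \<and> lab x = 1"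
  unfolding P_iff using a_in_AS by auto
lemma Q0_subset: "x \<in> Q 0 \<Longrightarrow> x \<in> AS \<and> lab x = -1"
  unfolding Q_iff using a_in_AS by auto

lemma norm_le_SUP: "A \<in> AS \<Longrightarrow> norm A \<le> (SUP A\<in>AS. norm A)"
  using bounded_AS by (intro cSUP_upper) (auto simp: bdd_above_norm)

lemma norm_proxy_le_R: "norm (proxy lab c (a i) v \<beta>') \<le> R"
  using norm_proxy_le[OF c_pos] norm_le_SUP[OF a_in_AS[of i]] unfolding R_def
  by (meson add_right_mono order.trans)

lemma norm_a_le_R: "norm (a i) \<le> R"
proof -
  have "0 < 2 / c" using c_pos by simp
  then show ?thesis using norm_le_SUP[OF a_in_AS[of i]] unfolding R_def by linarith
qed

lemma R_pos: "0 < R"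
proof -
  have "0 < 2 / c" using c_pos by simp
  then show ?thesis using norm_le_SUP[OF a_in_AS[of 0]] norm_ge_zero[of "a 0"] unfolding R_def
    by linarith
qed

lemma norm_P: "x \<in> P t \<Longrightarrow> norm x \<le> R"
  and norm_Q: "x \<in> Q t \<Longrightarrow> norm x \<le> R"
  unfolding P_iff Q_iff using norm_a_le_R norm_proxy_le_R by blast+

lemma margin_u:
  assumes "A \<in> AS"
  shows margin_u_pos: "lab A = 1 \<Longrightarrow> d \<le> u \<bullet> A + \<beta>"
    and margin_u_neg: "lab A = -1 \<Longrightarrow> u \<bullet> A + \<beta> \<le> -d"
proof -
  let ?f = "\<lambda>A. of_int (lab A) * (ys \<bullet> A + bs) / norm ys"
  have "0 < norm ys" using ys_nonzero by simp
  have eq: "?f A = of_int (lab A) * (u \<bullet> A + \<beta>)" for A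
    unfolding u_def \<beta>_def using ys_nonzero by (simp add: field_simps)
  have "bdd_below (?f ` AS)"
  proof (rule bdd_belowI2)
    fix A assume "A \<in> AS"
    have "\<bar>u \<bullet> A\<bar> \<le> norm A" using Cauchy_Schwarz_ineq2[of u A] norm_u by simp
    then have "\<bar>u \<bullet> A + \<beta>\<bar> \<le> (SUP A\<in>AS. norm A) + \<bar>\<beta>\<bar>"
      using abs_triangle_ineq[of "u \<bullet> A" \<beta>] norm_le_SUP[OF \<open>A \<in> AS\<close>] by linarith
    moreover have "lab A = 1 \<or> lab A = -1" using labels \<open>A \<in> AS\<close> by auto
    ultimately show "- ((SUP A\<in>AS. norm A) + \<bar>\<beta>\<bar>) \<le> ?f A"
      unfolding eq by (auto simp: abs_le_iff)
  qed
  then have "d \<le> ?f A" unfolding d_def smargin_def using assms by (rule cINF_lower)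
  then show "lab A = 1 \<Longrightarrow> d \<le> u \<bullet> A + \<beta>" and "lab A = -1 \<Longrightarrow> u \<bullet> A + \<beta> \<le> -d"
    unfolding eq by auto
qed

lemma inner_u_y1_pos: "0 < u \<bullet> y 1"
proof (rule hmarg_argmax_inner_pos[OF finite_P finite_Q P_nonempty Q_nonempty norm_u d_pos _ norm_y1])
  show "d \<le> hmarg u \<beta> (P 0) (Q 0)"
    using P0_subset Q0_subset margin_u
    by (intro hmarg_greatest[OF finite_P finite_Q P_nonempty Q_nonempty]) fastforce+
qed (rule y1_argmax)

lemma margin_u_P_aligned:
  assumes "\<And>\<tau>. 1 \<le> \<tau> \<Longrightarrow> \<tau> \<le> t \<Longrightarrow> 0 \<le> u \<bullet> y \<tau>" "x \<in> P t"
  shows "d \<le> u \<bullet> x + \<beta>"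
  using assms(2) unfolding P_iff
proof (elim disjE exE conjE)
  fix i assume "x = a i" "lab (a i) = 1"
  then show ?thesis using margin_u_pos[OF a_in_AS] by simp
next
  fix \<tau> assume \<tau>: "1 \<le> \<tau>" "\<tau> \<le> t" "lab (a (N+\<tau>)) = 1" "x = proxy lab c (a (N+\<tau>)) (y \<tau>) (b \<tau>)"
  show ?thesis
    unfolding \<tau>(4) using \<tau>(3) margin_u_pos[OF a_in_AS \<tau>(3)] assms(1)[OF \<tau>(1,2)]
    by (rule proxy_pos_margin)
qed

lemma margin_u_Q_aligned:
  assumes "\<And>\<tau>. 1 \<le> \<tau> \<Longrightarrow> \<tau> \<le> t \<Longrightarrow> 0 \<le> u \<bullet> y \<tau>" "x \<in> Q t"
  shows "u \<bullet> x + \<beta> \<le> -d"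
  using assms(2) unfolding Q_iff
proof (elim disjE exE conjE)
  fix i assume "x = a i" "lab (a i) = -1"
  then show ?thesis using margin_u_neg[OF a_in_AS] by simp
next
  fix \<tau> assume \<tau>: "1 \<le> \<tau>" "\<tau> \<le> t" "lab (a (N+\<tau>)) = -1" "x = proxy lab c (a (N+\<tau>)) (y \<tau>) (b \<tau>)"
  show ?thesis
    unfolding \<tau>(4) using \<tau>(3) margin_u_neg[OF a_in_AS \<tau>(3)] assms(1)[OF \<tau>(1,2)]
    by (rule proxy_neg_margin)
qed

lemma y_eq_average: "1 \<le> t \<Longrightarrow> y t = (\<Sum>\<tau>=1..t. \<gamma> \<tau> *\<^sub>R z \<tau>) /\<^sub>R (\<Sum>\<tau>=1..t. \<gamma> \<tau>)"
proof (induction t rule: nat_induct_at_least)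
  case base
  then show ?case using z1 by (simp add: \<gamma>_def)
next
  case (Suc t)
  then show ?case using y_Suc by blast
qed

lemma sum_gamma_pos: "1 \<le> t \<Longrightarrow> 0 < (\<Sum>\<tau>=1..t. \<gamma> \<tau>)"
  by (intro sum_pos) (auto simp: gamma_pos)

lemma inner_u_y_pos_if_z:
  assumes "1 \<le> t" "\<And>\<tau>. 1 \<le> \<tau> \<Longrightarrow> \<tau> \<le> t \<Longrightarrow> 0 < u \<bullet> z \<tau>"
  shows "0 < u \<bullet> y t"
proof -
  have "0 < (\<Sum>\<tau>=1..t. \<gamma> \<tau> * (u \<bullet> z \<tau>))" using assms gamma_pos by (intro sum_pos) auto
  then show ?thesis
    using y_eq_average[OF assms(1)] sum_gamma_pos[OF assms(1)] by (simp add: inner_sum_right)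
qed

text \<open>\<open>z\<close> stays on the side of \<open>u\<close> because each gradient step adds the difference of a
  positive and a negative proxy, and these remain separated by \<open>u\<close> as long as the
  earlier \<open>y \<tau>\<close> are on the side of \<open>u\<close>.\<close>

lemma inner_u_z_pos: "1 \<le> t \<Longrightarrow> 0 < u \<bullet> z t"
proof (induction t rule: less_induct)
  case (less t)
  show ?case
  proof (cases "t = 1")
    case True
    then show ?thesis using z1 inner_u_y1_pos by simp
  next
    case False
    then obtain s where t: "t = Suc s" "1 \<le> s" using less.prems by (cases t) auto
    have y_pos: "0 \<le> u \<bullet> y \<tau>" if "1 \<le> \<tau>" "\<tau> \<le> s" for \<tau>
      using inner_u_y_pos_if_z[OF that(1)] less.IH that t by force
    obtain sp sm where s: "sp \<in> P s" "sm \<in> Q s"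
      "z (Suc s) = closest_point (cball 0 1) (z s + \<gamma> s *\<^sub>R (sp - sm))"
      using z_step[OF t(2)] by blast
    have "0 < u \<bullet> sp - u \<bullet> sm"
      using margin_u_P_aligned[OF y_pos s(1)] margin_u_Q_aligned[OF y_pos s(2)] d_pos by linarith
    then have "0 < \<gamma> s * (u \<bullet> sp - u \<bullet> sm)" using gamma_pos[OF t(2)] by simp
    then have "0 < u \<bullet> z s + \<gamma> s * (u \<bullet> sp - u \<bullet> sm)"
      using less.IH[of s] t by simp
    then show ?thesis
      unfolding t(1) s(3) by (intro inner_closest_point_unit_cball_pos)
        (simp add: inner_add_right inner_diff_right)
  qed
qed

lemma inner_u_y_pos: "1 \<le> t \<Longrightarrow> 0 < u \<bullet> y t"
  using inner_u_y_pos_if_z inner_u_z_pos by simp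

lemma margin_u_P: "x \<in> P t \<Longrightarrow> d \<le> u \<bullet> x + \<beta>"
  using margin_u_P_aligned inner_u_y_pos less_imp_le by blast
lemma margin_u_Q: "x \<in> Q t \<Longrightarrow> u \<bullet> x + \<beta> \<le> -d"
  using margin_u_Q_aligned inner_u_y_pos less_imp_le by blast

lemma norm_z: "1 \<le> t \<Longrightarrow> norm (z t) \<le> 1"
proof (induction t rule: nat_induct_at_least)
  case base
  then show ?case using z1 norm_y1 by simp
next
  case (Suc t)
  then show ?case using z_step norm_closest_point_unit_cball by metis
qed

lemma norm_y: "1 \<le> t \<Longrightarrow> norm (y t) \<le> 1"
proof -
  assume "1 \<le> t"
  have "norm (\<Sum>\<tau>=1..t. \<gamma> \<tau> *\<^sub>R z \<tau>) \<le> (\<Sum>\<tau>=1..t. norm (\<gamma> \<tau> *\<^sub>R z \<tau>))" by (rule norm_sum)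
  also have "\<dots> \<le> (\<Sum>\<tau>=1..t. \<gamma> \<tau>)"
  proof (rule sum_mono)
    fix \<tau> assume "\<tau> \<in> {1..t}"
    then have "0 < \<gamma> \<tau>" "norm (z \<tau>) \<le> 1" using gamma_pos norm_z by auto
    then show "norm (\<gamma> \<tau> *\<^sub>R z \<tau>) \<le> \<gamma> \<tau>" by (simp add: mult_left_le)
  qed
  finally have "norm (\<Sum>\<tau>=1..t. \<gamma> \<tau> *\<^sub>R z \<tau>) / (\<Sum>\<tau>=1..t. \<gamma> \<tau>) \<le> 1"
    using sum_gamma_pos[OF \<open>1 \<le> t\<close>] by (simp add: divide_le_eq)
  moreover have "norm (y t) = norm (\<Sum>\<tau>=1..t. \<gamma> \<tau> *\<^sub>R z \<tau>) / (\<Sum>\<tau>=1..t. \<gamma> \<tau>)"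
    using y_eq_average[OF \<open>1 \<le> t\<close>] sum_gamma_pos[OF \<open>1 \<le> t\<close>]
    by (simp add: divide_inverse mult.commute)
  ultimately show ?thesis by simp
qed

definition "P_all = (\<Union>t. P t)"
definition "Q_all = (\<Union>t. Q t)"
definition "W = {p - n |p n. p \<in> P_all \<and> n \<in> Q_all}"

abbreviation "F \<equiv> inf_inner W"

lemma norm_P_all: "x \<in> P_all \<Longrightarrow> norm x \<le> R" unfolding P_all_def using norm_P by blast
lemma norm_Q_all: "x \<in> Q_all \<Longrightarrow> norm x \<le> R" unfolding Q_all_def using norm_Q by blast
lemma P_all_nonempty: "P_all \<noteq> {}" unfolding P_all_def using P_nonempty by blast
lemma Q_all_nonempty: "Q_all \<noteq> {}" unfolding Q_all_def using Q_nonempty by blast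
lemma W_nonempty: "W \<noteq> {}" unfolding W_def using P_all_nonempty Q_all_nonempty by blast

lemma norm_W: "w \<in> W \<Longrightarrow> norm w \<le> 2 * R"
proof -
  assume "w \<in> W"
  then obtain p n where "w = p - n" "p \<in> P_all" "n \<in> Q_all" unfolding W_def by blast
  then show ?thesis using norm_P_all norm_Q_all norm_triangle_ineq4[of p n] by force
qed

lemma bounded_W: "bounded W" using norm_W by (auto simp: bounded_iff)

lemma F_u: "2 * d \<le> F u"
proof (rule inf_inner_greatest[OF W_nonempty])
  fix w assume "w \<in> W"
  then obtain p n where "w = p - n" "p \<in> P_all" "n \<in> Q_all" unfolding W_def by blast
  then show "2 * d \<le> u \<bullet> w"
    using margin_u_P margin_u_Q unfolding P_all_def Q_all_def by (force simp: inner_diff_right)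
qed

definition "y_lim = (SOME v. norm v \<le> 1 \<and> (\<forall>v'. norm v' \<le> 1 \<longrightarrow> F v' \<le> F v))"
definition "F_max = F y_lim"

lemma y_lim: "norm y_lim \<le> 1" and F_le_F_max: "norm v \<le> 1 \<Longrightarrow> F v \<le> F_max"
proof -
  have "cball (0::'a) 1 \<noteq> {}" by simp
  then obtain v0 where "v0 \<in> cball 0 1" "\<forall>v'\<in>cball 0 1. F v' \<le> F v0"
    using continuous_attains_sup[OF compact_cball _ continuous_on_inf_inner[OF bounded_W W_nonempty]]
    by blast
  then have "\<exists>v. norm v \<le> 1 \<and> (\<forall>v'. norm v' \<le> 1 \<longrightarrow> F v' \<le> F v)" by auto
  then have "norm y_lim \<le> 1 \<and> (\<forall>v'. norm v' \<le> 1 \<longrightarrow> F v' \<le> F y_lim)"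
    unfolding y_lim_def by (rule someI_ex)
  then show "norm y_lim \<le> 1" "norm v \<le> 1 \<Longrightarrow> F v \<le> F_max" unfolding F_max_def by auto
qed

lemma F_max_ge: "2 * d \<le> F_max" using F_u F_le_F_max[of u] norm_u by simp
lemma F_max_pos: "0 < F_max" using F_max_ge d_pos by linarith

lemma norm_y_lim: "norm y_lim = 1"
  using inf_inner_argmax_norm[OF bounded_W W_nonempty F_le_F_max F_max_pos y_lim]
  unfolding F_max_def by simp

lemma eq_y_lim_if_F_max: "norm v \<le> 1 \<Longrightarrow> F_max \<le> F v \<Longrightarrow> v = y_lim"
  using inf_inner_argmax_unique[OF bounded_W W_nonempty F_le_F_max F_max_pos _ _ y_lim]
  unfolding F_max_def by simp

lemma near_y_lim_if_F_near_F_max: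
  assumes "0 < \<epsilon>"
  shows "\<exists>\<eta>>0. \<forall>v. norm v \<le> 1 \<and> F_max - \<eta> < F v \<longrightarrow> norm (v - y_lim) < \<epsilon>"
proof -
  have "y_lim \<in> cball 0 1" using y_lim by simp
  moreover have "\<And>v. v \<in> cball 0 1 \<Longrightarrow> F y_lim \<le> F v \<Longrightarrow> v = y_lim"
    using eq_y_lim_if_F_max unfolding F_max_def by simp
  ultimately obtain \<eta> where "0 < \<eta>" "\<forall>v\<in>cball 0 1. F y_lim - \<eta> < F v \<longrightarrow> dist v y_lim < \<epsilon>"
    using compact_unique_argmax_approx[OF compact_cball continuous_on_inf_inner[OF bounded_W W_nonempty]
        _ _ assms] by blast
  then show ?thesis unfolding F_max_def by (auto simp: dist_norm)
qed

text \<open>\<open>smm_run\<close> only asserts that suitable extreme proxies exist; \<open>grad t\<close> fixes one choice.\<close>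

definition "grad t = (SOME g. \<exists>sp sm. g = sp - sm \<and> sp \<in> P t \<and> (\<forall>x\<in>P t. z t \<bullet> sp \<le> z t \<bullet> x) \<and>
   sm \<in> Q t \<and> (\<forall>x\<in>Q t. z t \<bullet> x \<le> z t \<bullet> sm) \<and> z (Suc t) = closest_point (cball 0 1) (z t + \<gamma> t *\<^sub>R g))"

lemma grad:
  assumes "1 \<le> t"
  obtains sp sm where "grad t = sp - sm" "sp \<in> P t" "\<forall>x\<in>P t. z t \<bullet> sp \<le> z t \<bullet> x"
    "sm \<in> Q t" "\<forall>x\<in>Q t. z t \<bullet> x \<le> z t \<bullet> sm"
    "z (Suc t) = closest_point (cball 0 1) (z t + \<gamma> t *\<^sub>R grad t)"
proof -
  have "\<exists>g sp sm. g = sp - sm \<and> sp \<in> P t \<and> (\<forall>x\<in>P t. z t \<bullet> sp \<le> z t \<bullet> x) \<and>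
      sm \<in> Q t \<and> (\<forall>x\<in>Q t. z t \<bullet> x \<le> z t \<bullet> sm) \<and>
      z (Suc t) = closest_point (cball 0 1) (z t + \<gamma> t *\<^sub>R g)"
    using z_step[OF assms] by blast
  from someI_ex[OF this] show ?thesis using that unfolding grad_def[symmetric] by blast
qed

lemma grad_in_W: "1 \<le> t \<Longrightarrow> grad t \<in> W"
  by (rule grad) (auto simp: W_def P_all_def Q_all_def)

lemma z_Suc: "1 \<le> t \<Longrightarrow> z (Suc t) = closest_point (cball 0 1) (z t + \<gamma> t *\<^sub>R grad t)"
  by (rule grad)

lemma grad_minimal:
  assumes "1 \<le> t" "p \<in> P t" "n \<in> Q t"
  shows "z t \<bullet> grad t \<le> z t \<bullet> (p - n)"
proof (rule grad[OF assms(1)])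
  fix sp sm assume "grad t = sp - sm" "\<forall>x\<in>P t. z t \<bullet> sp \<le> z t \<bullet> x" "\<forall>x\<in>Q t. z t \<bullet> x \<le> z t \<bullet> sm"
  then show ?thesis using assms(2,3) by (force simp: inner_diff_right)
qed

lemma P_eventually_dense: "0 < \<delta> \<Longrightarrow> \<exists>T. \<forall>t\<ge>T. \<forall>x\<in>P_all. \<exists>x'\<in>P t. dist x x' < \<delta>"
  unfolding P_all_def
  by (rule incseq_Union_eventually_dense[of "\<lambda>t. P t", OF _ P_mono])
    (auto simp: bounded_iff intro: norm_P)

lemma Q_eventually_dense: "0 < \<delta> \<Longrightarrow> \<exists>T. \<forall>t\<ge>T. \<forall>x\<in>Q_all. \<exists>x'\<in>Q t. dist x x' < \<delta>"
  unfolding Q_all_def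
  by (rule incseq_Union_eventually_dense[of "\<lambda>t. Q t", OF _ Q_mono])
    (auto simp: bounded_iff intro: norm_Q)

text \<open>Since \<open>P t\<close> and \<open>Q t\<close> eventually approximate all proxies ever seen, the chosen
  direction becomes an almost exact minimiser of \<open>z t \<bullet> w\<close> over \<open>W\<close>.\<close>

lemma grad_eventually_almost_minimal:
  assumes "0 < \<delta>"
  shows "\<exists>T. \<forall>t\<ge>T. grad t \<bullet> z t - F (z t) \<le> 2 * \<delta>"
proof -
  obtain T1 where T1: "\<forall>t\<ge>T1. \<forall>x\<in>P_all. \<exists>x'\<in>P t. dist x x' < \<delta>"
    using P_eventually_dense[OF assms] by blast
  obtain T2 where T2: "\<forall>t\<ge>T2. \<forall>x\<in>Q_all. \<exists>x'\<in>Q t. dist x x' < \<delta>"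
    using Q_eventually_dense[OF assms] by blast
  show ?thesis
  proof (intro exI[of _ "max 1 (max T1 T2)"] allI impI)
    fix t assume t: "max 1 (max T1 T2) \<le> t"
    then have "1 \<le> t" by simp
    have close: "\<bar>z t \<bullet> x - z t \<bullet> x'\<bar> < \<delta>" if "dist x x' < \<delta>" for x x'
    proof -
      have "\<bar>z t \<bullet> (x - x')\<bar> \<le> norm (z t) * norm (x - x')" by (rule Cauchy_Schwarz_ineq2)
      also have "\<dots> \<le> norm (x - x')" using norm_z[OF \<open>1 \<le> t\<close>] by (simp add: mult_left_le_one_le)
      also have "\<dots> < \<delta>" using that by (simp add: dist_norm)
      finally show ?thesis by (simp add: inner_diff_right)
    qed
    have "grad t \<bullet> z t - 2 * \<delta> \<le> z t \<bullet> w" if "w \<in> W" for w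
    proof -
      obtain p n where pn: "w = p - n" "p \<in> P_all" "n \<in> Q_all" using \<open>w \<in> W\<close> unfolding W_def by blast
      obtain p' n' where "p' \<in> P t" "dist p p' < \<delta>" "n' \<in> Q t" "dist n n' < \<delta>"
        using T1 T2 pn(2,3) t by force
      then show ?thesis
        using grad_minimal[OF \<open>1 \<le> t\<close>, of p' n'] close[of p p'] close[of n n'] pn(1)
        by (simp add: inner_diff_right inner_commute abs_less_iff)
    qed
    then show "grad t \<bullet> z t - F (z t) \<le> 2 * \<delta>"
      using inf_inner_greatest[OF W_nonempty] by fastforce
  qed
qed

lemma regret_bound:
  assumes "1 \<le> T"
  shows "(\<Sum>t=1..T. \<gamma> t * (F_max - F (z t)))
    \<le> 2 + (\<Sum>t=1..T. \<gamma> t * (2 * R\<^sup>2 * \<gamma> t + (grad t \<bullet> z t - F (z t))))"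
proof -
  let ?r = "\<lambda>t. 2 * \<gamma> t * (grad t \<bullet> y_lim - grad t \<bullet> z t) - (\<gamma> t)\<^sup>2 * (2 * R)\<^sup>2"
  have "(\<Sum>t=1..T. ?r t) \<le> (norm (z 1 - y_lim))\<^sup>2 - (norm (z (Suc T) - y_lim))\<^sup>2"
    by (rule projected_ascent_regret[where g = grad and G = "2 * R", OF z_Suc norm_W[OF grad_in_W] y_lim])
  moreover have "norm (z 1 - y_lim) \<le> 2"
    using norm_triangle_ineq4[of "z 1" y_lim] norm_z[of 1] y_lim by simp
  then have "(norm (z 1 - y_lim))\<^sup>2 \<le> 2\<^sup>2" by (intro power_mono) auto
  ultimately have sum4: "(\<Sum>t=1..T. ?r t) \<le> 2\<^sup>2"
    using zero_le_power2[of "norm (z (Suc T) - y_lim)"] by linarith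
  have summand: "\<gamma> t * (F_max - F (z t)) \<le> ?r t / 2 + \<gamma> t * (2 * R\<^sup>2 * \<gamma> t + (grad t \<bullet> z t - F (z t)))"
    if "t \<in> {1..T}" for t
  proof -
    have "F_max \<le> y_lim \<bullet> grad t"
      unfolding F_max_def using that by (intro inf_inner_le[OF bounded_W grad_in_W]) auto
    then have "\<gamma> t * F_max \<le> \<gamma> t * (grad t \<bullet> y_lim)"
      using gamma_pos[of t] that by (simp add: inner_commute)
    moreover have "?r t / 2 + \<gamma> t * (2 * R\<^sup>2 * \<gamma> t + (grad t \<bullet> z t - F (z t)))
        = \<gamma> t * (grad t \<bullet> y_lim) - \<gamma> t * F (z t)"
      by (simp add: power2_eq_square field_simps)
    moreover have "\<gamma> t * (F_max - F (z t)) = \<gamma> t * F_max - \<gamma> t * F (z t)"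
      by (simp add: algebra_simps)
    ultimately show ?thesis by linarith
  qed
  have "(\<Sum>t=1..T. \<gamma> t * (F_max - F (z t)))
      \<le> (\<Sum>t=1..T. ?r t / 2 + \<gamma> t * (2 * R\<^sup>2 * \<gamma> t + (grad t \<bullet> z t - F (z t))))"
    by (rule sum_mono) (rule summand)
  also have "\<dots> = (\<Sum>t=1..T. ?r t) / 2 + (\<Sum>t=1..T. \<gamma> t * (2 * R\<^sup>2 * \<gamma> t + (grad t \<bullet> z t - F (z t))))"
    by (simp only: sum.distrib sum_divide_distrib)
  finally show ?thesis using sum4 by (simp add: power2_eq_square)
qed

lemma F_y_ge_average: "1 \<le> t \<Longrightarrow> (\<Sum>\<tau>=1..t. \<gamma> \<tau> * F (z \<tau>)) / (\<Sum>\<tau>=1..t. \<gamma> \<tau>) \<le> F (y t)"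
proof (rule inf_inner_greatest[OF W_nonempty])
  fix w assume "1 \<le> t" "w \<in> W"
  have "(\<Sum>\<tau>=1..t. \<gamma> \<tau> * F (z \<tau>)) \<le> (\<Sum>\<tau>=1..t. \<gamma> \<tau> * (z \<tau> \<bullet> w))"
    using inf_inner_le[OF bounded_W \<open>w \<in> W\<close>] by (intro sum_mono mult_left_mono) (auto simp: \<gamma>_def)
  also have "\<dots> = (\<Sum>\<tau>=1..t. \<gamma> \<tau> *\<^sub>R z \<tau>) \<bullet> w" by (simp add: inner_sum_left)
  finally show "(\<Sum>\<tau>=1..t. \<gamma> \<tau> * F (z \<tau>)) / (\<Sum>\<tau>=1..t. \<gamma> \<tau>) \<le> y t \<bullet> w"
    using y_eq_average[OF \<open>1 \<le> t\<close>] sum_gamma_pos[OF \<open>1 \<le> t\<close>]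
    by (simp add: divide_right_mono divide_inverse mult.commute)
qed

lemma F_y_eventually_near_F_max:
  assumes "0 < \<epsilon>"
  shows "\<exists>T. \<forall>t\<ge>T. F_max - F (y t) \<le> \<epsilon>"
proof -
  define e where "e t = 2 * R\<^sup>2 * \<gamma> t + (grad t \<bullet> z t - F (z t))" for t
  have "\<exists>T. \<forall>t\<ge>T. e t \<le> \<epsilon>'" if "0 < \<epsilon>'" for \<epsilon>'
  proof -
    have "0 < \<epsilon>' / 4" using \<open>0 < \<epsilon>'\<close> by simp
    then obtain T1 where T1: "\<forall>t\<ge>T1. grad t \<bullet> z t - F (z t) \<le> 2 * (\<epsilon>' / 4)"
      by (rule exE[OF grad_eventually_almost_minimal])
    define T2 where "T2 = nat \<lceil>(4 * R\<^sup>2 / \<epsilon>')\<^sup>2\<rceil> + 1"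
    have T2: "2 * R\<^sup>2 * \<gamma> t \<le> \<epsilon>' / 2" if "T2 \<le> t" for t
    proof -
      have "(4 * R\<^sup>2 / \<epsilon>')\<^sup>2 \<le> real t" using that unfolding T2_def by linarith
      then have "4 * R\<^sup>2 / \<epsilon>' \<le> sqrt (real t)" by (simp add: real_le_rsqrt)
      moreover have "0 < sqrt (real t)" using that unfolding T2_def by simp
      ultimately show ?thesis using \<open>0 < \<epsilon>'\<close> by (simp add: \<gamma>_def field_simps)
    qed
    show ?thesis
    proof (intro exI[of _ "max T1 T2"] allI impI)
      fix t assume "max T1 T2 \<le> t"
      then show "e t \<le> \<epsilon>'" using T1 T2[of t] unfolding e_def by auto
    qed
  qed
  then obtain T where T: "\<forall>T'\<ge>T. (2 + (\<Sum>t=1..T'. e t / sqrt (real t))) / (\<Sum>t=1..T'. 1 / sqrt (real t)) \<le> \<epsilon>"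
    using inverse_sqrt_weighted_average_le[OF _ assms] by blast
  show ?thesis
  proof (intro exI[of _ "max T 1"] allI impI)
    fix t assume t: "max T 1 \<le> t"
    then have "1 \<le> t" by simp
    define S where "S = (\<Sum>\<tau>=1..t. \<gamma> \<tau>)"
    have "0 < S" unfolding S_def by (rule sum_gamma_pos[OF \<open>1 \<le> t\<close>])
    have "F_max - F (y t) \<le> F_max - (\<Sum>\<tau>=1..t. \<gamma> \<tau> * F (z \<tau>)) / S"
      using F_y_ge_average[OF \<open>1 \<le> t\<close>] unfolding S_def by simp
    also have "\<dots> = (\<Sum>\<tau>=1..t. \<gamma> \<tau> * (F_max - F (z \<tau>))) / S"
      using \<open>0 < S\<close> unfolding S_def
      by (simp add: sum_subtractf right_diff_distrib sum_distrib_left[symmetric] sum_distrib_right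
          field_simps)
    also have "\<dots> \<le> (2 + (\<Sum>\<tau>=1..t. \<gamma> \<tau> * e \<tau>)) / S"
      using regret_bound[OF \<open>1 \<le> t\<close>] \<open>0 < S\<close> unfolding e_def by (intro divide_right_mono) auto
    also have "\<dots> \<le> \<epsilon>" using T t unfolding S_def \<gamma>_def by (simp add: mult.commute)
    finally show "F_max - F (y t) \<le> \<epsilon>" .
  qed
qed

lemma y_tendsto: "y \<longlonglongrightarrow> y_lim"
proof (rule LIMSEQ_I)
  fix r :: real assume "0 < r"
  obtain \<eta> where "0 < \<eta>" and \<eta>: "\<forall>v. norm v \<le> 1 \<and> F_max - \<eta> < F v \<longrightarrow> norm (v - y_lim) < r"
    using near_y_lim_if_F_near_F_max[OF \<open>0 < r\<close>] by blast
  obtain T where T: "\<forall>t\<ge>T. F_max - F (y t) \<le> \<eta> / 2"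
    using F_y_eventually_near_F_max[of "\<eta> / 2"] \<open>0 < \<eta>\<close> by auto
  show "\<exists>T. \<forall>t\<ge>T. norm (y t - y_lim) < r"
  proof (intro exI[of _ "max T 1"] allI impI)
    fix t assume "max T 1 \<le> t"
    then have "norm (y t) \<le> 1" "F_max - \<eta> < F (y t)" using T norm_y \<open>0 < \<eta>\<close> by force+
    then show "norm (y t - y_lim) < r" using \<eta> by blast
  qed
qed

definition "m_pos = Inf ((\<lambda>x. y_lim \<bullet> x) ` P_all)"
definition "m_neg = Sup ((\<lambda>x. y_lim \<bullet> x) ` Q_all)"
definition "b_lim = - (1/2) * (m_pos + m_neg)"
definition "D = (m_pos - m_neg) / 2"

lemma bounded_P_all: "bounded P_all" using norm_P_all by (auto simp: bounded_iff)
lemma bounded_Q_all: "bounded Q_all" using norm_Q_all by (auto simp: bounded_iff)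

lemma m_pos_le: "x \<in> P_all \<Longrightarrow> m_pos \<le> y_lim \<bullet> x"
  unfolding m_pos_def by (rule cInf_lower) (auto intro: bdd_below_inner_image bounded_P_all)
lemma m_neg_ge: "x \<in> Q_all \<Longrightarrow> y_lim \<bullet> x \<le> m_neg"
  unfolding m_neg_def by (rule cSup_upper) (auto intro: bdd_above_inner_image bounded_Q_all)

lemma F_max_le_gap: "F_max \<le> m_pos - m_neg"
proof -
  have "m_neg \<le> y_lim \<bullet> p - F_max" if "p \<in> P_all" for p
  proof -
    have "y_lim \<bullet> n \<le> y_lim \<bullet> p - F_max" if "n \<in> Q_all" for n
    proof -
      have "p - n \<in> W" using \<open>p \<in> P_all\<close> \<open>n \<in> Q_all\<close> unfolding W_def by blast
      then have "F_max \<le> y_lim \<bullet> (p - n)" unfolding F_max_def by (rule inf_inner_le[OF bounded_W])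
      then show ?thesis by (simp add: inner_diff_right)
    qed
    then show ?thesis unfolding m_neg_def using Q_all_nonempty by (intro cSup_least) auto
  qed
  then have "m_neg + F_max \<le> m_pos"
    unfolding m_pos_def using P_all_nonempty by (intro cInf_greatest) (auto simp: algebra_simps)
  then show ?thesis by simp
qed

lemma d_le_D: "d \<le> D" unfolding D_def using F_max_le_gap F_max_ge by simp
lemma D_pos: "0 < D" using d_le_D d_pos by simp

lemma margin_lim_P: "x \<in> P_all \<Longrightarrow> D \<le> y_lim \<bullet> x + b_lim"
  using m_pos_le[of x] unfolding D_def b_lim_def by (simp add: field_simps)
lemma margin_lim_Q: "x \<in> Q_all \<Longrightarrow> y_lim \<bullet> x + b_lim \<le> - D"
  using m_neg_ge[of x] unfolding D_def b_lim_def by (simp add: field_simps)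

text \<open>The offset \<open>b t\<close> is the midpoint of the extreme projections of the current
  proxies, which converge to those of all proxies.\<close>

lemma b_tendsto: "b \<longlonglongrightarrow> b_lim"
proof -
  have y': "(\<lambda>t. y (Suc t)) \<longlonglongrightarrow> y_lim" by (rule LIMSEQ_Suc[OF y_tendsto])
  have m1: "(\<lambda>t. Min ((\<lambda>x. y (Suc t) \<bullet> x) ` P t)) \<longlonglongrightarrow> m_pos"
    unfolding m_pos_def
    by (rule Min_inner_tendsto_Inf[OF finite_P P_nonempty _ norm_P_all P_eventually_dense y'])
      (auto simp: P_all_def)
  have m2: "(\<lambda>t. - Min ((\<lambda>x. (- y (Suc t)) \<bullet> x) ` Q t)) \<longlonglongrightarrow> m_neg"
    unfolding m_neg_def Sup_inner_image_eq_uminus_Inf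
    by (intro tendsto_minus Min_inner_tendsto_Inf[OF finite_Q Q_nonempty _ norm_Q_all
          Q_eventually_dense tendsto_minus[OF y']]) (auto simp: Q_all_def)
  have "(\<lambda>t. - (1/2) * (Min ((\<lambda>x. y (Suc t) \<bullet> x) ` P t)
      + - Min ((\<lambda>x. (- y (Suc t)) \<bullet> x) ` Q t))) \<longlonglongrightarrow> - (1/2) * (m_pos + m_neg)"
    by (intro tendsto_mult tendsto_const tendsto_add[OF m1 m2])
  then have "(\<lambda>t. - (1/2) * (Min ((\<lambda>x. y (Suc t) \<bullet> x) ` P t)
      + - Min ((\<lambda>x. (- y (Suc t)) \<bullet> x) ` Q t))) \<longlonglongrightarrow> b_lim"
    unfolding b_lim_def .
  moreover have "\<forall>\<^sub>F t in sequentially. - (1/2) * (Min ((\<lambda>x. y (Suc t) \<bullet> x) ` P t)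
      + - Min ((\<lambda>x. (- y (Suc t)) \<bullet> x) ` Q t)) = b (Suc t)"
    unfolding eventually_sequentially
    using b_Suc Max_inner_image_eq_uminus_Min[OF finite_Q Q_nonempty] by (intro exI[of _ 1]) auto
  ultimately have "(\<lambda>t. b (Suc t)) \<longlonglongrightarrow> b_lim" by (rule Lim_transform_eventually)
  then show ?thesis by (rule LIMSEQ_imp_Suc)
qed

lemma eventually_separates:
  assumes "0 < \<rho>"
  shows "\<exists>T. \<forall>t\<ge>T. (\<forall>x\<in>P_all. D - \<rho> < y t \<bullet> x + b t) \<and> (\<forall>x\<in>Q_all. y t \<bullet> x + b t < \<rho> - D)"
proof -
  have "0 < \<rho> / (2 * R)" using assms R_pos by simp
  moreover have "0 < \<rho> / 2" using assms by simp
  ultimately have "\<forall>\<^sub>F t in sequentially. dist (y t) y_lim < \<rho> / (2 * R) \<and> dist (b t) b_lim < \<rho> / 2"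
    by (intro eventually_conj tendstoD[OF y_tendsto] tendstoD[OF b_tendsto])
  then obtain T where T: "\<And>t. T \<le> t \<Longrightarrow> dist (y t) y_lim < \<rho> / (2 * R) \<and> dist (b t) b_lim < \<rho> / 2"
    unfolding eventually_sequentially by blast
  have close: "\<bar>(y t \<bullet> x + b t) - (y_lim \<bullet> x + b_lim)\<bar> < \<rho>"
    if "T \<le> t" "norm x \<le> R" for t x
  proof -
    have "\<bar>y t \<bullet> x - y_lim \<bullet> x\<bar> = \<bar>(y t - y_lim) \<bullet> x\<bar>" by (simp add: inner_diff_left)
    also have "\<dots> \<le> norm (y t - y_lim) * norm x" by (rule Cauchy_Schwarz_ineq2)
    also have "\<dots> \<le> norm (y t - y_lim) * R" using that(2) by (intro mult_left_mono) auto
    also have "\<dots> \<le> \<rho> / 2" using T[OF that(1)] R_pos by (simp add: dist_norm field_simps)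
    finally have "\<bar>y t \<bullet> x - y_lim \<bullet> x\<bar> \<le> \<rho> / 2" .
    moreover have "\<bar>b t - b_lim\<bar> < \<rho> / 2" using T[OF that(1)] by (simp add: dist_real_def)
    moreover have "(y t \<bullet> x + b t) - (y_lim \<bullet> x + b_lim) = (y t \<bullet> x - y_lim \<bullet> x) + (b t - b_lim)"
      by simp
    ultimately show ?thesis
      using abs_triangle_ineq[of "y t \<bullet> x - y_lim \<bullet> x" "b t - b_lim"] by linarith
  qed
  show ?thesis
  proof (intro exI[of _ T] allI impI conjI ballI)
    fix t x assume "T \<le> t"
    show "D - \<rho> < y t \<bullet> x + b t" if "x \<in> P_all"
      using close[OF \<open>T \<le> t\<close> norm_P_all[OF that]] margin_lim_P[OF that] by (simp add: abs_less_iff)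
    show "y t \<bullet> x + b t < \<rho> - D" if "x \<in> Q_all"
      using close[OF \<open>T \<le> t\<close> norm_Q_all[OF that]] margin_lim_Q[OF that] by (simp add: abs_less_iff)
  qed
qed

lemma proxy_in_P_all: "1 \<le> t \<Longrightarrow> lab (a (N+t)) = 1 \<Longrightarrow> proxy lab c (a (N+t)) (y t) (b t) \<in> P_all"
  using proxy_in_P unfolding P_all_def by blast
lemma proxy_in_Q_all: "1 \<le> t \<Longrightarrow> lab (a (N+t)) = -1 \<Longrightarrow> proxy lab c (a (N+t)) (y t) (b t) \<in> Q_all"
  using proxy_in_Q unfolding Q_all_def by blast

lemma finite_mistakes:
  "finite {t. 1 \<le> t \<and> lhat c (resp c (a (N + t)) (y t) (b t)) (y t) (b t) \<noteq> lab (a (N + t))}"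
proof -
  from eventually_separates[OF D_pos] obtain T where
    T: "\<forall>t\<ge>T. (\<forall>x\<in>P_all. D - D < y t \<bullet> x + b t) \<and> (\<forall>x\<in>Q_all. y t \<bullet> x + b t < D - D)" ..
  have "t < T" if "1 \<le> t" "lhat c (resp c (a (N + t)) (y t) (b t)) (y t) (b t) \<noteq> lab (a (N + t))" for t
  proof (rule ccontr)
    assume "\<not> t < T"
    then have sep: "\<forall>x\<in>P_all. 0 < y t \<bullet> x + b t" "\<forall>x\<in>Q_all. y t \<bullet> x + b t < 0"
      using T by simp_all
    from mistake_proxy_misclassified[where lab = lab and A = "a (N + t)", OF c_pos lab_a that(2)]
    show False
    proof (elim disjE conjE)
      assume "lab (a (N + t)) = 1" "y t \<bullet> proxy lab c (a (N + t)) (y t) (b t) + b t < 0"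
      then show False using sep(1) proxy_in_P_all[OF that(1)] by fastforce
    next
      assume "lab (a (N + t)) = -1" "0 \<le> y t \<bullet> proxy lab c (a (N + t)) (y t) (b t) + b t"
      then show False using sep(2) proxy_in_Q_all[OF that(1)] by fastforce
    qed
  qed
  then have "{t. 1 \<le> t \<and> lhat c (resp c (a (N + t)) (y t) (b t)) (y t) (b t) \<noteq> lab (a (N + t))}
      \<subseteq> {..<T}" by auto
  then show ?thesis by (rule finite_subset) simp
qed

lemma finite_moves:
  assumes "2 / c < smargin AS lab ys bs"
  shows "finite {t. 1 \<le> t \<and> resp c (a (N + t)) (y t) (b t) \<noteq> a (N + t)}"
proof -
  have "0 < d - 2 / c" using assms unfolding d_def by simp
  from eventually_separates[OF this] obtain T where
    T: "\<forall>t\<ge>T. (\<forall>x\<in>P_all. D - (d - 2 / c) < y t \<bullet> x + b t)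
      \<and> (\<forall>x\<in>Q_all. y t \<bullet> x + b t < (d - 2 / c) - D)" ..
  have "t < T \<or> lhat c (resp c (a (N + t)) (y t) (b t)) (y t) (b t) \<noteq> lab (a (N + t))"
    if "1 \<le> t" "resp c (a (N + t)) (y t) (b t) \<noteq> a (N + t)" for t
  proof (cases "lab (a (N + t)) = 1")
    case True
    have bound: "2 * norm (y t) / c \<le> 2 / c"
      using norm_y[OF that(1)] c_pos by (simp add: divide_right_mono)
    have boundary: "y t \<bullet> proxy lab c (a (N + t)) (y t) (b t) + b t = 2 * norm (y t) / c"
      using proxy_on_boundary_if_moved[where lab = lab and A = "a (N + t)", OF that(2) True] .
    have "\<not> T \<le> t"
    proof
      assume "T \<le> t"
      then have "D - (d - 2 / c) < y t \<bullet> proxy lab c (a (N + t)) (y t) (b t) + b t"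
        using T proxy_in_P_all[OF that(1) True] by blast
      then show False using bound boundary d_le_D by linarith
    qed
    then show ?thesis by simp
  next
    case False
    then show ?thesis using lhat_resp_moved[OF that(2)] lab_a[of "N + t"] by simp
  qed
  then have "{t. 1 \<le> t \<and> resp c (a (N + t)) (y t) (b t) \<noteq> a (N + t)}
      \<subseteq> {..<T} \<union> {t. 1 \<le> t \<and> lhat c (resp c (a (N + t)) (y t) (b t)) (y t) (b t) \<noteq> lab (a (N + t))}"
    by auto
  moreover have "finite ({..<T} \<union> {t. 1 \<le> t \<and> lhat c (resp c (a (N + t)) (y t) (b t)) (y t) (b t)
      \<noteq> lab (a (N + t))})"
    using finite_mistakes by simp
  ultimately show ?thesis by (rule finite_subset)
qed

context
  assumes few_moves: "2 / c < smargin AS lab ys bs"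
    and dense: "\<forall>A\<in>AS. \<forall>e>0. \<forall>n. \<exists>i\<ge>n. dist A (a i) < e"
begin

lemma eventually_proxy_eq_agent: "\<exists>T\<ge>1. \<forall>t\<ge>T. proxy lab c (a (N + t)) (y t) (b t) = a (N + t)"
proof -
  obtain T where T: "{t. 1 \<le> t \<and> resp c (a (N + t)) (y t) (b t) \<noteq> a (N + t)} \<subseteq> {..<T}"
    using finite_nat_bounded[OF finite_moves[OF few_moves]] by blast
  show ?thesis
  proof (intro exI[of _ "max T 1"] conjI allI impI)
    fix t assume "max T 1 \<le> t"
    then have "resp c (a (N + t)) (y t) (b t) = a (N + t)" using T by fastforce
    then show "proxy lab c (a (N + t)) (y t) (b t) = a (N + t)" by (rule proxy_eq_if_resp_eq)
  qed simp
qed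

text \<open>Agents close to a point of \<open>AS\<close> share its label, because \<open>u\<close> separates \<open>AS\<close> with
  margin \<open>d\<close>; once agents stop moving they are their own proxies.\<close>

lemma AS_approximated_by_proxies:
  assumes "A \<in> AS" "0 < e"
  shows "\<exists>x. dist A x < e \<and> ((lab A = 1 \<and> x \<in> P_all) \<or> (lab A = -1 \<and> x \<in> Q_all))"
proof -
  obtain T where "1 \<le> T" and T: "\<And>t. T \<le> t \<Longrightarrow> proxy lab c (a (N + t)) (y t) (b t) = a (N + t)"
    using eventually_proxy_eq_agent by blast
  obtain i where "N + T \<le> i" "dist A (a i) < min e d"
    using dense assms d_pos by (meson min_less_iff_conj)
  define t where "t = i - N"
  have "i = N + t" "T \<le> t" "1 \<le> t" using \<open>N + T \<le> i\<close> \<open>1 \<le> T\<close> unfolding t_def by auto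
  have "\<bar>u \<bullet> A - u \<bullet> a i\<bar> < d"
    using abs_inner_diff_le[of u A "a i"] norm_u \<open>dist A (a i) < min e d\<close> by simp
  moreover have "lab A = 1 \<or> lab A = -1" using labels assms(1) by auto
  moreover note lab_a[of i] margin_u[OF assms(1)] margin_u[OF a_in_AS[of i]]
  ultimately have "lab (a i) = lab A" using d_pos by (auto simp: abs_less_iff)
  moreover have "lab A = 1 \<or> lab A = -1" using labels assms(1) by auto
  ultimately show ?thesis
    using proxy_in_P_all[OF \<open>1 \<le> t\<close>] proxy_in_Q_all[OF \<open>1 \<le> t\<close>] T[OF \<open>T \<le> t\<close>]
      \<open>dist A (a i) < min e d\<close> unfolding \<open>i = N + t\<close> by auto
qed

lemma D_le_smargin_lim: "D \<le> smargin AS lab y_lim b_lim"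
  unfolding smargin_def
proof (rule cINF_greatest)
  show "AS \<noteq> {}" using a_in_AS by blast
  fix A assume "A \<in> AS"
  have close: "\<bar>y_lim \<bullet> A - y_lim \<bullet> x\<bar> < e" if "dist A x < e" for x e
    using abs_inner_diff_le[of y_lim A x] norm_y_lim that by simp
  have "lab A = 1 \<Longrightarrow> D \<le> y_lim \<bullet> A + b_lim"
  proof (rule field_le_epsilon)
    fix e :: real assume "lab A = 1" "0 < e"
    then obtain x where "dist A x < e" "x \<in> P_all"
      using AS_approximated_by_proxies[OF \<open>A \<in> AS\<close>] by force
    then show "D \<le> y_lim \<bullet> A + b_lim + e" using margin_lim_P close by force
  qed
  moreover have "lab A = -1 \<Longrightarrow> y_lim \<bullet> A + b_lim \<le> - D"
  proof (rule field_le_epsilon)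
    fix e :: real assume "lab A = -1" "0 < e"
    then obtain x where "dist A x < e" "x \<in> Q_all"
      using AS_approximated_by_proxies[OF \<open>A \<in> AS\<close>] by force
    then show "y_lim \<bullet> A + b_lim \<le> - D + e" using margin_lim_Q close by force
  qed
  moreover have "lab A = 1 \<or> lab A = -1" using labels \<open>A \<in> AS\<close> by auto
  ultimately show "D \<le> of_int (lab A) * (y_lim \<bullet> A + b_lim) / norm y_lim"
    using norm_y_lim by auto
qed

lemma D_eq_d: "D = d"
proof -
  have "y_lim \<noteq> 0" using norm_y_lim by auto
  then have "smargin AS lab y_lim b_lim \<le> d" unfolding d_def using margin_max by blast
  then show ?thesis using D_le_smargin_lim d_le_D by linarith
qed

lemma y_lim_eq_u: "y_lim = u"
proof -
  have "F_max \<le> F u" using F_max_le_gap F_u D_eq_d unfolding D_def by simp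
  then show ?thesis using eq_y_lim_if_F_max[of u] norm_u by simp
qed

lemma b_lim_eq_\<beta>: "b_lim = \<beta>"
proof -
  have "d - \<beta> \<le> m_pos"
    unfolding m_pos_def y_lim_eq_u
  proof (rule cInf_greatest)
    fix v assume "v \<in> (\<lambda>x. u \<bullet> x) ` P_all"
    then obtain x t where "x \<in> P t" "v = u \<bullet> x" unfolding P_all_def by blast
    then show "d - \<beta> \<le> v" using margin_u_P[of x t] by simp
  qed (simp add: P_all_nonempty)
  moreover have "m_neg \<le> - d - \<beta>"
    unfolding m_neg_def y_lim_eq_u
  proof (rule cSup_least)
    fix v assume "v \<in> (\<lambda>x. u \<bullet> x) ` Q_all"
    then obtain x t where "x \<in> Q t" "v = u \<bullet> x" unfolding Q_all_def by blast
    then show "v \<le> - d - \<beta>" using margin_u_Q[of x t] by simp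
  qed (simp add: Q_all_nonempty)
  moreover have "m_pos - m_neg = 2 * d" using D_eq_d unfolding D_def by simp
  ultimately have "m_pos = d - \<beta>" "m_neg = - d - \<beta>" by linarith+
  then show ?thesis unfolding b_lim_def by simp
qed

lemma converges_to_margin_maximiser: "(y \<longlonglongrightarrow> ys /\<^sub>R norm ys) \<and> (b \<longlonglongrightarrow> bs / norm ys)"
  using y_tendsto b_tendsto unfolding y_lim_eq_u b_lim_eq_\<beta> u_def \<beta>_def by simp

end

end

theorem mainTheorem13:
  fixes AS :: "'a::euclidean_space set" and lab :: "'a \<Rightarrow> int" and c :: real
    and ys :: 'a and bs :: real
  assumes c_pos: "c > 0"
    and labels: "\<forall>A\<in>AS. lab A \<in> {-1, 1}"
    and margin_attained: "ys \<noteq> 0" "\<forall>y b. y \<noteq> 0 \<longrightarrow> smargin AS lab y b \<le> smargin AS lab ys bs"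
    and margin_pos: "smargin AS lab ys bs > 0"
    and bounded_AS: "bounded AS"
  shows
   "(\<forall>a N y b z. smm_run AS lab c (\<lambda>t. 1 / sqrt (real t)) a N y b z \<longrightarrow>
       finite {t. t \<ge> 1 \<and>
          lhat c (resp c (a (N + t)) (y t) (b t)) (y t) (b t) \<noteq> lab (a (N + t))})
    \<and> (smargin AS lab ys bs > 2 / c \<longrightarrow>
       (\<forall>a N y b z. smm_run AS lab c (\<lambda>t. 1 / sqrt (real t)) a N y b z \<longrightarrow>
         finite {t. t \<ge> 1 \<and> resp c (a (N + t)) (y t) (b t) \<noteq> a (N + t)}))
    \<and> (smargin AS lab ys bs > 2 / c \<longrightarrow>
       (\<forall>(M :: 'w measure) (P :: 'a measure) (X :: nat \<Rightarrow> 'w \<Rightarrow> 'a).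
         closed AS \<and> prob_space P \<and> sets P = sets borel \<and>
         (\<forall>A\<in>AS. \<forall>e>0. measure P (cball A e) > 0) \<and>
         (\<forall>A. A \<notin> AS \<longrightarrow> (\<exists>e>0. measure P (cball A e) = 0)) \<and>
         prob_space M \<and> prob_space.indep_vars M (\<lambda>_. borel) X UNIV \<and>
         (\<forall>i. distr M borel (X i) = P)
         \<longrightarrow> (AE \<omega> in M. \<forall>N y b z.
                smm_run AS lab c (\<lambda>t. 1 / sqrt (real t)) (\<lambda>i. X i \<omega>) N y b z \<longrightarrow>
                (y \<longlonglongrightarrow> ys /\<^sub>R norm ys) \<and> (b \<longlonglongrightarrow> bs / norm ys))))"
proof -
  have analysis: "smm_analysis AS lab c ys bs a N y b z"
    if "smm_run AS lab c (\<lambda>t. 1 / sqrt (real t)) a N y b z" for a N y b z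
    using assms that unfolding smm_analysis_def by blast
  have "AE \<omega> in M. \<forall>N y b z. smm_run AS lab c (\<lambda>t. 1 / sqrt (real t)) (\<lambda>i. X i \<omega>) N y b z \<longrightarrow>
      (y \<longlonglongrightarrow> ys /\<^sub>R norm ys) \<and> (b \<longlonglongrightarrow> bs / norm ys)"
    if "2 / c < smargin AS lab ys bs" "prob_space P" "sets P = sets borel"
      "\<forall>A\<in>AS. \<forall>e>0. measure P (cball A e) > 0" "prob_space M"
      "prob_space.indep_vars M (\<lambda>_. borel) X UNIV" "\<forall>i. distr M borel (X i) = P"
    for M :: "'w measure" and P X
  proof -
    have "AE \<omega> in M. \<forall>A\<in>AS. \<forall>e>0. \<forall>n. \<exists>i\<ge>n. dist A (X i \<omega>) < e"
      using AE_iid_dense_in_support[of M X P AS] that by simp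
    then show ?thesis
      by (rule eventually_mono)
        (use smm_analysis.converges_to_margin_maximiser[OF analysis] that(1) in blast)
  qed
  then show ?thesis
    using smm_analysis.finite_mistakes[OF analysis] smm_analysis.finite_moves[OF analysis] by blast
qed

end
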